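(* Consider the discrete-time LPV system $x_{k+1}=A(p_k)x_k+B(p_k)u_k$ with affine $A(p)=A_0+\sum_{i=1}^{n_p}p_iA_i$, $B(p)=B_0+\sum_{i=1}^{n_p}p_iB_i$, and a data set $\mathcal{D}$ from it such that $\mathcal{D}_p$ has full row rank $(1+n_p)(n_x+n_u)$. Suppose there exist $P\in\mathbb{S}^{n_x}$ with $P\succ0$, matrices $\mathcal{F}\in\mathbb{R}^{(N_d-1)\times n_x(1+n_p+n_p^2)}$ and $F_Q\in\mathbb{R}^{(N_d-1)(1+n_p)\times n_x(1+n_p)}$ related by $$\mathcal{F}\begin{bmatrix}I_{n_x}\\ p\otimes I_{n_x}\\ p\otimes p\otimes I_{n_x}\end{bmatrix}=\begin{bmatrix}I_{N_d-1}\\ p\otimes I_{N_d-1}\end{bmatrix}^\top F_Q\begin{bmatrix}I_{n_x}\\ p\otimes I_{n_x}\end{bmatrix}\quad\forall p\in\mathbb{P},$$ $Y_0\in\mathbb{R}^{n_u\times n_x}$, $\bar Y\in\mathbb{R}^{n_u\times n_xn_p}$ and $\Xi\in\mathbb{S}^{4n_pn_x}$ such that $$\begin{bmatrix}P&0&0\\0&I_{n_p}\otimes P&0\\ Y_0&\bar Y&0\\ 0& I_{n_p}\otimes Y_0& I_{n_p}\otimes\bar Y\end{bmatrix}=\mathcal{D}_p\mathcal{F},$$ and the full-block LMI conditions (defined in the context) hold with $\Delta(p)=\mathrm{diag}(p)\otimes I_{2n_x}$, $W=\begin{bmatrix}P_0&\mathcal{X}_+F_Q\\ (\mathcal{X}_+F_Q)^\top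 & P_0\end{bmatrix}$, $P_0=\mathrm{blkdiag}(P,0_{n_xn_p})$, $\mathcal{X}_+=\mathrm{blkdiag}(X_+,I_{n_p}\otimes X_+)$, $L_{11}=0_{2n_xn_p}$, $L_{12}=1_{n_p}\otimes I_{2n_x}$, $L_{21}=\begin{bmatrix}0_{n_x\times 2n_xn_p}\\ I_{n_p}\otimes[I_{n_x}\ 0]\\ 0_{n_x\times 2n_xn_p}\\ I_{n_p}\otimes[0\ I_{n_x}]\end{bmatrix}$, $L_{22}=\begin{bmatrix}[I_{n_x}\ 0]\\ 1_{n_p}\otimes 0_{n_x\times 2n_x}\\ [0\ I_{n_x}]\\ 1_{n_p}\otimes 0_{n_x\times 2n_x}\end{bmatrix}$. Then $K_0=Y_0P^{-1}$, $\bar K=\bar Y(I_{n_p}\otimes P)^{-1}$, with $\bar K=[K_1\ \cdots\ K_{n_p}]$, give an LPV state-feedback controller $K(p)=K_0+\sum_{i=1}^{n_p}p_iK_i$ that guarantees stability of the closed-loop interconnection $x_{k+1}=(A(p_k)+B(p_k)K(p_k))x_k$.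
   Context: Notation: $\otimes$ Kronecker product; $I_n$ identity; $0_{n\times m}$, $0_n$ zero matrices; $1_n\in\mathbb{R}^n$ the all-ones vector; $\mathbb{S}^n$ real symmetric $n\times n$ matrices; $\mathrm{blkdiag}$ block-diagonal concatenation; $\mathrm{diag}(p)$ diagonal matrix with the entries of $p$. The system has fully measured state $x_k\in\mathbb{R}^{n_x}$, input $u_k\in\mathbb{R}^{n_u}$, scheduling $p_k\in\mathbb{P}\subset\mathbb{R}^{n_p}$ with $\mathbb{P}$ compact and convex; $A_i,B_i$ unknown real matrices. $\mathcal{D}=\{u^d_k,p^d_k,x^d_k\}_{k=1}^{N_d}$ is a trajectory of the system; $U=[u^d_1\cdots u^d_{N_d-1}]$, $U^p=[p^d_1\otimes u^d_1\cdots p^d_{N_d-1}\otimes u^d_{N_d-1}]$, $X=[x^d_1\cdots x^d_{N_d-1}]$, $X^p=[p^d_1\otimes x^d_1\cdots p^d_{N_d-1}\otimes x^d_{N_d-1}]$, $X_+=[x^d_2\cdots x^d_{N_d}]$, $\mathcal{D}_p=[X^\top\ (X^p)^\top\ U^\top\ (U^p)^\top]^\top$. Stability of the closed loop means asymptotic stability for all scheduling trajectories with values in $\mathbb{P}$. Full-block LMI conditions for given $(\Delta(p),W,L_{11},L_{12},L_{21},L_{22})$ and symmetric multiplier $\Xi$: $\begin{bmatrix}L_{11}&L_{12}\\ I&0\end{bmatrix}^\top\Xi\begin{bmatrix}L_{11}&L_{12}\\ I&0\end{bmatrix}-\begin{bmatrix}L_{21}&L_{22}\end{bmatrix}^\top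 W\begin{bmatrix}L_{21}&L_{22}\end{bmatrix}\prec0$ and $\begin{bmatrix}I\\ \Delta(p)\end{bmatrix}^\top\Xi\begin{bmatrix}I\\ \Delta(p)\end{bmatrix}\succeq0$ for all $p\in\mathbb{P}$. *)

theory Defs
  imports "HOL-Analysis.Analysis" "Jordan_Normal_Form.DL_Rank"
begin

definition hcat :: "real mat \<Rightarrow> real mat \<Rightarrow> real mat" (infixr \<open>@\<^sub>h\<close> 66) where
  "A @\<^sub>h B = four_block_mat A B (0\<^sub>m 0 (dim_col A)) (0\<^sub>m 0 (dim_col B))"

definition blkdiag :: "real mat \<Rightarrow> real mat \<Rightarrow> real mat" where
  "blkdiag A B = four_block_mat A (0\<^sub>m (dim_row A) (dim_col B)) (0\<^sub>m (dim_row B) (dim_col A)) B"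

definition kron :: "real mat \<Rightarrow> real mat \<Rightarrow> real mat" where
  "kron A B = mat (dim_row A * dim_row B) (dim_col A * dim_col B)
     (\<lambda>(i,j). A $$ (i div dim_row B, j div dim_col B) * B $$ (i mod dim_row B, j mod dim_col B))"

definition kron_vec :: "real vec \<Rightarrow> real vec \<Rightarrow> real vec" where
  "kron_vec p x = vec (dim_vec p * dim_vec x) (\<lambda>i. p $ (i div dim_vec x) * x $ (i mod dim_vec x))"

definition colmat :: "real vec \<Rightarrow> real mat" where
  "colmat v = mat (dim_vec v) 1 (\<lambda>(i,_). v $ i)"

definition ones :: "nat \<Rightarrow> real mat" where
  "ones n = mat n 1 (\<lambda>_. 1)"

definition diagm :: "real vec \<Rightarrow> real mat" where
  "diagm p = mat (dim_vec p) (dim_vec p) (\<lambda>(i,j). if i = j then p $ i else 0)"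

definition minv :: "real mat \<Rightarrow> real mat" where
  "minv M = (THE B. B \<in> carrier_mat (dim_row M) (dim_row M) \<and> M * B = 1\<^sub>m (dim_row M) \<and> B * M = 1\<^sub>m (dim_row M))"

definition sym_mat :: "nat \<Rightarrow> real mat \<Rightarrow> bool" where
  "sym_mat n M \<longleftrightarrow> M \<in> carrier_mat n n \<and> transpose_mat M = M"

definition pos_def :: "nat \<Rightarrow> real mat \<Rightarrow> bool" where
  "pos_def n M \<longleftrightarrow> sym_mat n M \<and> (\<forall>x \<in> carrier_vec n. x \<noteq> 0\<^sub>v n \<longrightarrow> x \<bullet> (M *\<^sub>v x) > 0)"

definition neg_def :: "nat \<Rightarrow> real mat \<Rightarrow> bool" where
  "neg_def n M \<longleftrightarrow> pos_def n (- M)"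

definition psd :: "nat \<Rightarrow> real mat \<Rightarrow> bool" where
  "psd n M \<longleftrightarrow> sym_mat n M \<and> (\<forall>x \<in> carrier_vec n. x \<bullet> (M *\<^sub>v x) \<ge> 0)"

text \<open>Affine parameter dependence: aff M p n = M 0 + sum_{i=1}^n p_i M i
  (p is 0-indexed, so p_i = p $ (i-1)).\<close>
fun aff :: "(nat \<Rightarrow> real mat) \<Rightarrow> real vec \<Rightarrow> nat \<Rightarrow> real mat" where
  "aff M p 0 = M 0"
| "aff M p (Suc i) = aff M p i + (p $ i) \<cdot>\<^sub>m M (Suc i)"

definition dmat :: "nat \<Rightarrow> nat \<Rightarrow> (nat \<Rightarrow> real vec) \<Rightarrow> real mat" where
  "dmat n N f = mat n N (\<lambda>(i,k). f (k+1) $ i)"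

text \<open>Scheduling set: subset of R^np, compact and convex. Compactness is taken in the
  product topology of nat => real via vec_index (coordinates beyond np are fixed).\<close>
definition convex_vecset :: "real vec set \<Rightarrow> bool" where
  "convex_vecset S \<longleftrightarrow> (\<forall>p\<in>S. \<forall>q\<in>S. \<forall>t::real. 0 \<le> t \<and> t \<le> 1 \<longrightarrow> t \<cdot>\<^sub>v p + (1 - t) \<cdot>\<^sub>v q \<in> S)"

definition sched_set :: "nat \<Rightarrow> real vec set \<Rightarrow> bool" where
  "sched_set np S \<longleftrightarrow> S \<subseteq> carrier_vec np \<and> compact (vec_index ` S) \<and> convex_vecset S"

definition vnorm :: "real vec \<Rightarrow> real" where
  "vnorm x = sqrt (x \<bullet> x)"

fun cl_traj :: "(real vec \<Rightarrow> real mat) \<Rightarrow> (nat \<Rightarrow> real vec) \<Rightarrow> real vec \<Rightarrow> nat \<Rightarrow> real vec" where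
  "cl_traj Acl ps x0 0 = x0"
| "cl_traj Acl ps x0 (Suc k) = Acl (ps k) *\<^sub>v cl_traj Acl ps x0 k"

definition asymp_stable_LPV :: "nat \<Rightarrow> real vec set \<Rightarrow> (real vec \<Rightarrow> real mat) \<Rightarrow> bool" where
  "asymp_stable_LPV nx S Acl \<longleftrightarrow>
     (\<forall>ps. (\<forall>k. ps k \<in> S) \<longrightarrow>
        (\<forall>\<epsilon>>0. \<exists>\<delta>>0. \<forall>x0\<in>carrier_vec nx. vnorm x0 < \<delta> \<longrightarrow> (\<forall>k. vnorm (cl_traj Acl ps x0 k) < \<epsilon>))
      \<and> (\<exists>\<eta>>0. \<forall>x0\<in>carrier_vec nx. vnorm x0 < \<eta> \<longrightarrow> (\<lambda>k. vnorm (cl_traj Acl ps x0 k)) \<longlonglongrightarrow> 0))"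

end

theory Submission
  imports Defs
begin

(* For a frozen parameter p, the data equation D_p F = [...] says that the data columns,
   combined by F applied to the lifted state [v; p \<otimes> v; p \<otimes> p \<otimes> v], reproduce P v,
   p \<otimes> P v, the input u = Y_0 v + Ybar (p \<otimes> v) = K(p) P v and p \<otimes> u.  Since every data
   column obeys the LPV dynamics, the shifted data X_+ then reproduce A_cl(p) P v; together with
   F \<Pi>_3(p) = \<Pi>_N(p)^T F_Q \<Pi>(p) this identifies \<Pi>(p)^T blkdiag(X_+, I \<otimes> X_+) F_Q \<Pi>(p)
   with A_cl(p) P.  On vectors z = [p \<otimes> v; v] the multiplier term of the first LMI is
   nonnegative by the second LMI, so the strict first LMI yields a dissipation inequality
   eps (|v_1|^2 + |v_2|^2) <= v_1' P v_1 + v_2' P v_2 + 2 v_1' A_cl(p) P v_2 with eps independent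
   of p.  Choosing v_2 = P^-1 x and v_1 = -P^-1 A_cl(p) x shows that x' P^-1 x contracts by a fixed
   factor along every closed-loop trajectory, whence exponential and asymptotic stability. *)

unbundle no vec_syntax
unbundle no inner_syntax

section \<open>Kronecker products\<close>

lemma dim_row_kron [simp]: "dim_row (kron A B) = dim_row A * dim_row B"
  by (simp add: kron_def)

lemma dim_col_kron [simp]: "dim_col (kron A B) = dim_col A * dim_col B"
  by (simp add: kron_def)

lemma kron_carrier_mat [simp]:
  "kron A B \<in> carrier_mat (dim_row A * dim_row B) (dim_col A * dim_col B)"
  unfolding kron_def by simp

lemma kron_carrier_matI:
  "A \<in> carrier_mat ra ca \<Longrightarrow> B \<in> carrier_mat rb cb \<Longrightarrow> kron A B \<in> carrier_mat (ra * rb) (ca * cb)"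
  by auto

lemma index_kron [simp]:
  "i < dim_row A * dim_row B \<Longrightarrow> j < dim_col A * dim_col B \<Longrightarrow>
   kron A B $$ (i, j) = A $$ (i div dim_row B, j div dim_col B) * B $$ (i mod dim_row B, j mod dim_col B)"
  by (simp add: kron_def)

lemma dim_vec_kron_vec [simp]: "dim_vec (kron_vec p x) = dim_vec p * dim_vec x"
  by (simp add: kron_vec_def)

lemma kron_vec_carrier:
  "p \<in> carrier_vec m \<Longrightarrow> x \<in> carrier_vec n \<Longrightarrow> kron_vec p x \<in> carrier_vec (m * n)"
  by (intro carrier_vecI) simp

lemma index_kron_vec [simp]:
  "j < dim_vec p * dim_vec x \<Longrightarrow> kron_vec p x $ j = p $ (j div dim_vec x) * x $ (j mod dim_vec x)"
  by (simp add: kron_vec_def)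

lemma index_mult_mat_sum:
  "A \<in> carrier_mat nr n \<Longrightarrow> B \<in> carrier_mat n nc \<Longrightarrow> i < nr \<Longrightarrow> j < nc \<Longrightarrow>
   (A * B) $$ (i, j) = (\<Sum>k<n. A $$ (i, k) * B $$ (k, j))"
  by (simp add: scalar_prod_def lessThan_atLeast0)

lemma index_mult_mat_vec_sum:
  "A \<in> carrier_mat nr n \<Longrightarrow> v \<in> carrier_vec n \<Longrightarrow> i < nr \<Longrightarrow>
   (A *\<^sub>v v) $ i = (\<Sum>k<n. A $$ (i, k) * v $ k)"
  by (simp add: scalar_prod_def lessThan_atLeast0)

lemma mult_add_less_mult:
  assumes "i < m" "c < n" shows "i * n + c < m * (n::nat)"
proof -
  have "i * n + c < (i + 1) * n" using assms by simp
  also have "\<dots> \<le> m * n" using assms by (intro mult_le_mono1) simp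
  finally show ?thesis .
qed

lemma kron_mult:
  assumes A: "A \<in> carrier_mat ra ca" and C: "C \<in> carrier_mat ca cc"
    and B: "B \<in> carrier_mat rb cb" and D: "D \<in> carrier_mat cb cd"
  shows "kron A B * kron C D = kron (A * C) (B * D)"
proof (rule eq_matI)
  fix i j assume "i < dim_row (kron (A * C) (B * D))" "j < dim_col (kron (A * C) (B * D))"
  then have i: "i < ra * rb" and j: "j < cc * cd" using A B C D by auto
  then have "0 < rb" "0 < cd" by (auto intro: gr0I)
  then have i': "i div rb < ra" "i mod rb < rb" and j': "j div cd < cc" "j mod cd < cd"
    using i j by (simp_all add: less_mult_imp_div_less)
  have "(kron A B * kron C D) $$ (i, j) = (\<Sum>c<ca * cb. kron A B $$ (i, c) * kron C D $$ (c, j))"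
    by (rule index_mult_mat_sum[OF kron_carrier_matI[OF A B] kron_carrier_matI[OF C D] i j])
  also have "\<dots> = (\<Sum>a<ca. \<Sum>b<cb. kron A B $$ (i, a * cb + b) * kron C D $$ (a * cb + b, j))"
    by (simp add: sum_mult_product add.commute)
  also have "\<dots> = (\<Sum>a<ca. \<Sum>b<cb. (A $$ (i div rb, a) * C $$ (a, j div cd))
                                   * (B $$ (i mod rb, b) * D $$ (b, j mod cd)))"
    using i j A B C D by (intro sum.cong refl) (simp add: mult_add_less_mult mult_ac)
  also have "\<dots> = (A * C) $$ (i div rb, j div cd) * (B * D) $$ (i mod rb, j mod cd)"
    by (simp add: sum_product index_mult_mat_sum[OF A C i'(1) j'(1)] index_mult_mat_sum[OF B D i'(2) j'(2)])
  finally show "(kron A B * kron C D) $$ (i, j) = kron (A * C) (B * D) $$ (i, j)"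
    using i j A B C D by simp
qed (use A B C D in simp_all)

lemma transpose_kron: "transpose_mat (kron A B) = kron (transpose_mat A) (transpose_mat B)"
proof (rule eq_matI)
  fix i j assume "i < dim_row (kron (transpose_mat A) (transpose_mat B))"
    "j < dim_col (kron (transpose_mat A) (transpose_mat B))"
  then have "i < dim_col A * dim_col B" "j < dim_row A * dim_row B" by auto
  moreover from this have "0 < dim_col B" "0 < dim_row B" by (auto intro: gr0I)
  ultimately show "transpose_mat (kron A B) $$ (i, j) = kron (transpose_mat A) (transpose_mat B) $$ (i, j)"
    by (simp add: less_mult_imp_div_less)
qed auto

lemma kron_one_left: "kron (1\<^sub>m 1) A = A"
  by (rule eq_matI) auto

lemma kron_one_one: "kron (1\<^sub>m m) (1\<^sub>m n) = 1\<^sub>m (m * n)"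
proof (rule eq_matI)
  fix i j assume "i < dim_row (1\<^sub>m (m * n))" "j < dim_col (1\<^sub>m (m * n))"
  then have "i < m * n" "j < m * n" by auto
  moreover from this have "0 < n" by (auto intro: gr0I)
  moreover have "(i div n = j div n \<and> i mod n = j mod n) \<longleftrightarrow> i = j"
    by (metis div_mult_mod_eq)
  ultimately show "kron (1\<^sub>m m) (1\<^sub>m n) $$ (i, j) = 1\<^sub>m (m * n) $$ (i, j)"
    by (auto simp: less_mult_imp_div_less)
qed auto

lemma colmat_inject: "colmat v = colmat w \<Longrightarrow> v = w"
  by (metis colmat_def dim_row_mat(1) eq_vecI index_mat(1) less_one case_prod_conv)

lemma colmat_carrier_mat: "x \<in> carrier_vec n \<Longrightarrow> colmat x \<in> carrier_mat n 1"
  by (simp add: colmat_def)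

lemma colmat_mult_vec:
  assumes "M \<in> carrier_mat nr nc" "x \<in> carrier_vec nc"
  shows "colmat (M *\<^sub>v x) = M * colmat x"
proof (rule eq_matI)
  fix i j assume "i < dim_row (M * colmat x)" "j < dim_col (M * colmat x)"
  then have "i < nr" "j = 0" using assms by (auto simp: colmat_def)
  moreover have "vec nc (($) x) = x" using assms(2) by (intro eq_vecI) auto
  ultimately show "colmat (M *\<^sub>v x) $$ (i, j) = (M * colmat x) $$ (i, j)"
    using assms by (simp add: colmat_def)
qed (use assms in \<open>auto simp: colmat_def\<close>)

lemma colmat_kron_vec: "colmat (kron_vec p x) = kron (colmat p) (colmat x)"
proof (rule eq_matI)
  fix i j assume "i < dim_row (kron (colmat p) (colmat x))" "j < dim_col (kron (colmat p) (colmat x))"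
  then have "i < dim_vec p * dim_vec x" "j = 0" by (auto simp: colmat_def)
  moreover from this have "0 < dim_vec x" by (auto intro: gr0I)
  ultimately show "colmat (kron_vec p x) $$ (i, j) = kron (colmat p) (colmat x) $$ (i, j)"
    by (simp add: colmat_def less_mult_imp_div_less)
qed (auto simp: colmat_def)

lemma kron_mult_kron_vec:
  assumes A: "A \<in> carrier_mat ra ca" and p: "p \<in> carrier_vec ca"
    and B: "B \<in> carrier_mat rb cb" and x: "x \<in> carrier_vec cb"
  shows "kron A B *\<^sub>v kron_vec p x = kron_vec (A *\<^sub>v p) (B *\<^sub>v x)"
proof (rule colmat_inject)
  have "colmat (kron A B *\<^sub>v kron_vec p x) = kron A B * kron (colmat p) (colmat x)"
    using colmat_mult_vec[OF kron_carrier_matI[OF A B] kron_vec_carrier[OF p x]] by (simp add: colmat_kron_vec)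
  also have "\<dots> = kron (A * colmat p) (B * colmat x)"
    by (rule kron_mult[OF A colmat_carrier_mat[OF p] B colmat_carrier_mat[OF x]])
  also have "\<dots> = colmat (kron_vec (A *\<^sub>v p) (B *\<^sub>v x))"
    by (simp add: colmat_kron_vec colmat_mult_vec[OF A p] colmat_mult_vec[OF B x])
  finally show "colmat (kron A B *\<^sub>v kron_vec p x) = colmat (kron_vec (A *\<^sub>v p) (B *\<^sub>v x))" .
qed

lemma colmat_ones: "colmat (vec m (\<lambda>_. 1)) = ones m"
  by (rule eq_matI) (simp_all add: colmat_def ones_def)

lemma kron_vec_unit_left: "kron_vec (vec 1 (\<lambda>_. 1)) x = x"
  by (rule eq_vecI) simp_all

lemma kron_colmat_mult_vec:
  assumes "p \<in> carrier_vec m" "M \<in> carrier_mat nr nc" "x \<in> carrier_vec nc"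
  shows "kron (colmat p) M *\<^sub>v x = kron_vec p (M *\<^sub>v x)"
proof -
  have "colmat p *\<^sub>v vec 1 (\<lambda>_. 1) = p"
    using assms(1) by (intro eq_vecI) (auto simp: colmat_def scalar_prod_def)
  then show ?thesis
    using kron_mult_kron_vec[OF colmat_carrier_mat[OF assms(1)] _ assms(2,3), of "vec 1 (\<lambda>_. 1)"]
    unfolding kron_vec_unit_left by simp
qed

lemma kron_colmat_one_carrier: "p \<in> carrier_vec m \<Longrightarrow> kron (colmat p) (1\<^sub>m n) \<in> carrier_mat (m * n) n"
  using kron_carrier_matI[OF colmat_carrier_mat one_carrier_mat] by simp

lemma kron_one_mult_kron_vec:
  "M \<in> carrier_mat nr nc \<Longrightarrow> p \<in> carrier_vec m \<Longrightarrow> x \<in> carrier_vec nc \<Longrightarrow>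
   kron (1\<^sub>m m) M *\<^sub>v kron_vec p x = kron_vec p (M *\<^sub>v x)"
  using kron_mult_kron_vec[of "1\<^sub>m m" m m p M nr nc x] by simp

lemma kron_vec_assoc: "kron_vec (kron_vec p q) x = kron_vec p (kron_vec q x)"
proof (rule eq_vecI)
  fix j assume "j < dim_vec (kron_vec p (kron_vec q x))"
  then have j: "j < dim_vec p * (dim_vec q * dim_vec x)" by simp
  define Q X where "Q = dim_vec q" and "X = dim_vec x"
  have "0 < Q" "0 < X" using j unfolding Q_def X_def by (auto intro: gr0I)
  have div: "j div (Q * X) = j div X div Q" by (metis div_mult2_eq mult.commute)
  have "j mod (Q * X) = X * (j div X mod Q) + j mod X" by (metis mod_mult2_eq mult.commute)
  then have "j mod (Q * X) div X = j div X mod Q" "j mod (Q * X) mod X = j mod X"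
    using \<open>0 < X\<close> by simp_all
  moreover have "j div X < dim_vec p * Q" "j mod (Q * X) < Q * X"
    using j \<open>0 < Q\<close> \<open>0 < X\<close> unfolding Q_def X_def
    by (simp_all add: less_mult_imp_div_less mult.assoc mult.commute[of "dim_vec x"])
  ultimately show "kron_vec (kron_vec p q) x $ j = kron_vec p (kron_vec q x) $ j"
    using j div unfolding Q_def X_def by (simp add: mult.assoc)
qed simp

lemma kron_vec_add:
  assumes "x \<in> carrier_vec n" "y \<in> carrier_vec n"
  shows "kron_vec p (x + y) = kron_vec p x + kron_vec p y"
proof (rule eq_vecI)
  fix i assume "i < dim_vec (kron_vec p x + kron_vec p y)"
  then have "i < dim_vec p * n" "0 < n" using assms by (auto intro: gr0I)
  then show "kron_vec p (x + y) $ i = (kron_vec p x + kron_vec p y) $ i"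
    using assms by (simp add: algebra_simps)
qed (use assms in simp)

lemma kron_vec_zero: "kron_vec p (0\<^sub>v n) = 0\<^sub>v (dim_vec p * n)"
proof (rule eq_vecI)
  fix i assume "i < dim_vec (0\<^sub>v (dim_vec p * n) :: real vec)"
  then have "i < dim_vec p * n" "0 < n" by (auto intro: gr0I)
  then show "kron_vec p (0\<^sub>v n) $ i = 0\<^sub>v (dim_vec p * n) $ i" by simp
qed simp

lemma diagm_carrier: "p \<in> carrier_vec m \<Longrightarrow> diagm p \<in> carrier_mat m m"
  by (simp add: diagm_def)

lemma diagm_mult_ones:
  assumes "p \<in> carrier_vec m" shows "diagm p *\<^sub>v vec m (\<lambda>_. 1) = p"
proof (rule eq_vecI)
  fix i assume "i < dim_vec p"
  then have "i < m" using assms by simp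
  then have "(diagm p *\<^sub>v vec m (\<lambda>_. 1)) $ i = (\<Sum>k<m. if k = i then p $ i else 0)"
    using assms by (simp add: index_mult_mat_vec_sum[of _ m m] diagm_def del: index_mult_mat_vec)
  also have "\<dots> = p $ i" using \<open>i < m\<close> by simp
  finally show "(diagm p *\<^sub>v vec m (\<lambda>_. 1)) $ i = p $ i" .
qed (use assms in \<open>simp add: diagm_def\<close>)

section \<open>Block matrices and lifted states\<close>

lemma zero_mat_mult_vec: "x \<in> carrier_vec c \<Longrightarrow> 0\<^sub>m r c *\<^sub>v x = 0\<^sub>v r"
  by (rule eq_vecI) (auto simp: scalar_prod_def)

lemma hcat_carrier [intro]:
  "A \<in> carrier_mat r c1 \<Longrightarrow> B \<in> carrier_mat r c2 \<Longrightarrow> A @\<^sub>h B \<in> carrier_mat r (c1 + c2)"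
  unfolding hcat_def by auto

lemma hcat_mult_vec:
  assumes A: "A \<in> carrier_mat r c1" and B: "B \<in> carrier_mat r c2"
    and a: "a \<in> carrier_vec c1" and b: "b \<in> carrier_vec c2"
  shows "(A @\<^sub>h B) *\<^sub>v (a @\<^sub>v b) = A *\<^sub>v a + B *\<^sub>v b"
proof -
  have "(A @\<^sub>h B) *\<^sub>v (a @\<^sub>v b) = (A *\<^sub>v a + B *\<^sub>v b) @\<^sub>v (0\<^sub>m 0 c1 *\<^sub>v a + 0\<^sub>m 0 c2 *\<^sub>v b)"
    unfolding hcat_def using A B a b by (subst four_block_mat_mult_vec[OF A B _ _ a b]) auto
  also have "\<dots> = A *\<^sub>v a + B *\<^sub>v b"
    by (intro eq_vecI) (use A B in auto)
  finally show ?thesis .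
qed

lemma hcat3_mult_vec:
  assumes "A \<in> carrier_mat r c1" "B \<in> carrier_mat r c2" "C \<in> carrier_mat r c3"
    and "a \<in> carrier_vec c1" "b \<in> carrier_vec c2" "c \<in> carrier_vec c3"
  shows "(A @\<^sub>h B @\<^sub>h C) *\<^sub>v (a @\<^sub>v b @\<^sub>v c) = A *\<^sub>v a + (B *\<^sub>v b + C *\<^sub>v c)"
  using assms by (simp add: hcat_mult_vec[of _ r c1 _ "c2 + c3"] hcat_mult_vec[of B r c2 C c3] hcat_carrier)

lemma blkdiag_carrier [intro]:
  "A \<in> carrier_mat r1 c1 \<Longrightarrow> B \<in> carrier_mat r2 c2 \<Longrightarrow> blkdiag A B \<in> carrier_mat (r1 + r2) (c1 + c2)"
  unfolding blkdiag_def by auto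

lemma blkdiag_mult_vec:
  "A \<in> carrier_mat r1 c1 \<Longrightarrow> B \<in> carrier_mat r2 c2 \<Longrightarrow> a \<in> carrier_vec c1 \<Longrightarrow> b \<in> carrier_vec c2 \<Longrightarrow>
   blkdiag A B *\<^sub>v (a @\<^sub>v b) = (A *\<^sub>v a) @\<^sub>v (B *\<^sub>v b)"
  unfolding blkdiag_def by (subst four_block_mat_mult_vec) auto

lemma transpose_append_rows_mult_vec:
  assumes A: "(A :: real mat) \<in> carrier_mat r1 c" and B: "B \<in> carrier_mat r2 c"
    and a: "a \<in> carrier_vec r1" and b: "b \<in> carrier_vec r2"
  shows "transpose_mat (A @\<^sub>r B) *\<^sub>v (a @\<^sub>v b) = transpose_mat A *\<^sub>v a + transpose_mat B *\<^sub>v b"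
proof -
  have "transpose_mat (A @\<^sub>r B) = transpose_mat A @\<^sub>h transpose_mat B"
    by (rule eq_matI) (use A B in \<open>auto simp: append_rows_def hcat_def\<close>)
  then show ?thesis using A B a b by (simp add: hcat_mult_vec)
qed

lemma append_rows4_mult_vec:
  assumes "(A1 :: real mat) \<in> carrier_mat r1 c" "A2 \<in> carrier_mat r2 c" "A3 \<in> carrier_mat r3 c"
    "A4 \<in> carrier_mat r4 c" "x \<in> carrier_vec c"
  shows "(A1 @\<^sub>r A2 @\<^sub>r A3 @\<^sub>r A4) *\<^sub>v x = (A1 *\<^sub>v x) @\<^sub>v (A2 *\<^sub>v x) @\<^sub>v (A3 *\<^sub>v x) @\<^sub>v (A4 *\<^sub>v x)"
  using assms by (simp add: mat_mult_append[of _ r1 c _ "r2 + (r3 + r4)"] mat_mult_append[of _ r2 c _ "r3 + r4"]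
      mat_mult_append[of _ r3 c _ r4] carrier_append_rows)

lemma append_vec_assoc: "(a @\<^sub>v b) @\<^sub>v c = a @\<^sub>v (b @\<^sub>v c)"
proof (rule eq_vecI)
  fix i assume "i < dim_vec (a @\<^sub>v (b @\<^sub>v c))"
  then show "((a @\<^sub>v b) @\<^sub>v c) $ i = (a @\<^sub>v (b @\<^sub>v c)) $ i"
    by (cases "i < dim_vec a"; cases "i < dim_vec a + dim_vec b") auto
qed simp

definition lift_mat :: "nat \<Rightarrow> real vec \<Rightarrow> real mat" where
  "lift_mat n p = 1\<^sub>m n @\<^sub>r kron (colmat p) (1\<^sub>m n)"

lemma lift_mat_carrier: "p \<in> carrier_vec m \<Longrightarrow> lift_mat n p \<in> carrier_mat (n + m * n) n"
  unfolding lift_mat_def by (intro carrier_append_rows kron_colmat_one_carrier) auto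

lemma lift_mat_mult_vec:
  "p \<in> carrier_vec m \<Longrightarrow> x \<in> carrier_vec n \<Longrightarrow> lift_mat n p *\<^sub>v x = x @\<^sub>v kron_vec p x"
  unfolding lift_mat_def
  by (subst mat_mult_append[OF one_carrier_mat kron_colmat_one_carrier])
     (auto simp: kron_colmat_mult_vec[OF _ one_carrier_mat])

lemma lift2_mult_vec:
  assumes p: "p \<in> carrier_vec m" and v: "v \<in> carrier_vec n"
  shows "(1\<^sub>m n @\<^sub>r kron (colmat p) (1\<^sub>m n) @\<^sub>r kron (kron (colmat p) (colmat p)) (1\<^sub>m n)) *\<^sub>v v
       = v @\<^sub>v kron_vec p v @\<^sub>v kron_vec p (kron_vec p v)"
proof -
  have pp: "kron_vec p p \<in> carrier_vec (m * m)" using p by (intro kron_vec_carrier)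
  have K1: "kron (colmat p) (1\<^sub>m n) \<in> carrier_mat (m * n) n" using p by (rule kron_colmat_one_carrier)
  have K2: "kron (kron (colmat p) (colmat p)) (1\<^sub>m n) \<in> carrier_mat (m * m * n) n"
    using kron_colmat_one_carrier[OF pp] by (simp add: colmat_kron_vec)
  have "kron (kron (colmat p) (colmat p)) (1\<^sub>m n) *\<^sub>v v = kron_vec p (kron_vec p v)"
    using kron_colmat_mult_vec[OF pp one_carrier_mat v] v by (simp add: colmat_kron_vec kron_vec_assoc)
  then show ?thesis
    using v by (simp add: mat_mult_append[OF one_carrier_mat carrier_append_rows[OF K1 K2] v]
        mat_mult_append[OF K1 K2 v] kron_colmat_mult_vec[OF p one_carrier_mat v])
qed

lemma transpose_lift_mat_mult_blkdiag:
  assumes p: "p \<in> carrier_vec m" and X: "X \<in> carrier_mat n N" and w: "w \<in> carrier_vec (N + m * N)"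
  shows "transpose_mat (lift_mat n p) *\<^sub>v (blkdiag X (kron (1\<^sub>m m) X) *\<^sub>v w)
       = X *\<^sub>v (transpose_mat (lift_mat N p) *\<^sub>v w)"
proof -
  define w0 w1 where "w0 = vec_first w N" and "w1 = vec_last w (m * N)"
  have w0: "w0 \<in> carrier_vec N" and w1: "w1 \<in> carrier_vec (m * N)" and w01: "w = w0 @\<^sub>v w1"
    using vec_first_last_append[OF w] unfolding w0_def w1_def by auto
  have P: "colmat p \<in> carrier_mat m 1" using p by (rule colmat_carrier_mat)
  define T where "T k = transpose_mat (kron (colmat p) (1\<^sub>m k))" for k
  have T: "T k \<in> carrier_mat k (m * k)" for k unfolding T_def using P by auto
  have "T n * kron (1\<^sub>m m) X = kron (transpose_mat (colmat p) * 1\<^sub>m m) (1\<^sub>m n * X)"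
    unfolding T_def transpose_kron transpose_one
    by (rule kron_mult) (use P X in auto)
  also have "\<dots> = kron (1\<^sub>m 1 * transpose_mat (colmat p)) (X * 1\<^sub>m N)"
    using P X by simp
  also have "\<dots> = kron (1\<^sub>m 1) X * kron (transpose_mat (colmat p)) (1\<^sub>m N)"
    by (rule kron_mult[symmetric]) (use P X in auto)
  also have "\<dots> = X * T N"
    unfolding kron_one_left T_def transpose_kron transpose_one ..
  finally have TX: "T n * kron (1\<^sub>m m) X = X * T N" .
  have KX: "kron (1\<^sub>m m) X \<in> carrier_mat (m * n) (m * N)" using X by auto
  have "transpose_mat (lift_mat n p) *\<^sub>v (blkdiag X (kron (1\<^sub>m m) X) *\<^sub>v w)
      = transpose_mat (1\<^sub>m n) *\<^sub>v (X *\<^sub>v w0) + T n *\<^sub>v (kron (1\<^sub>m m) X *\<^sub>v w1)"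
    unfolding lift_mat_def w01 blkdiag_mult_vec[OF X KX w0 w1] T_def
    by (rule transpose_append_rows_mult_vec[OF one_carrier_mat kron_colmat_one_carrier[OF p]])
       (use X KX w0 w1 in auto)
  also have "\<dots> = X *\<^sub>v w0 + (T n * kron (1\<^sub>m m) X) *\<^sub>v w1"
    using X w0 assoc_mult_mat_vec[OF T KX w1] by simp
  also have "\<dots> = X *\<^sub>v (w0 + T N *\<^sub>v w1)"
    unfolding TX assoc_mult_mat_vec[OF X T w1]
    using mult_add_distrib_mat_vec[OF X w0 mult_mat_vec_carrier[OF T w1]] by simp
  also have "w0 + T N *\<^sub>v w1 = transpose_mat (lift_mat N p) *\<^sub>v w"
    unfolding lift_mat_def w01 T_def
    by (subst transpose_append_rows_mult_vec[OF one_carrier_mat kron_colmat_one_carrier[OF p]])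
       (use w0 w1 in auto)
  finally show ?thesis .
qed

lemma lift_blkdiag_mult_carrier:
  assumes X: "X \<in> carrier_mat n N" and FQ: "FQ \<in> carrier_mat (N * (1 + m)) (n * (1 + m))"
  shows "blkdiag X (kron (1\<^sub>m m) X) * FQ \<in> carrier_mat (n + m * n) (n + m * n)"
proof -
  have "blkdiag X (kron (1\<^sub>m m) X) \<in> carrier_mat (n + m * n) (N + m * N)"
    using X by (intro blkdiag_carrier kron_carrier_matI) auto
  moreover have "FQ \<in> carrier_mat (N + m * N) (n + m * n)" using FQ by (simp add: algebra_simps)
  ultimately show ?thesis by simp
qed

section \<open>Inverses, quadratic forms and positive definite matrices\<close>

lemma minv_unique:
  assumes M: "M \<in> carrier_mat n n" and B: "B \<in> carrier_mat n n" and MB: "M * B = 1\<^sub>m n" and BM: "B * M = 1\<^sub>m n"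
  shows "minv M = B"
  unfolding minv_def carrier_matD(1)[OF M]
proof (rule the_equality)
  fix B' assume "B' \<in> carrier_mat n n \<and> M * B' = 1\<^sub>m n \<and> B' * M = 1\<^sub>m n"
  then have B': "B' \<in> carrier_mat n n" and "B' * M = 1\<^sub>m n" by auto
  then have "B' = B' * (M * B)" using MB by simp
  also have "\<dots> = B" using \<open>B' * M = 1\<^sub>m n\<close> B by (simp add: assoc_mult_mat[symmetric, OF B' M B])
  finally show "B' = B" .
qed (use B MB BM in simp)

lemma minv_mult:
  assumes M: "(M :: real mat) \<in> carrier_mat n n" and "det M \<noteq> 0"
  shows "minv M \<in> carrier_mat n n" "M * minv M = 1\<^sub>m n" "minv M * M = 1\<^sub>m n"
proof -
  obtain B where "B \<in> carrier_mat n n" "M * B = 1\<^sub>m n" "B * M = 1\<^sub>m n"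
    using det_non_zero_imp_unit[OF assms, of undefined] unfolding Units_def ring_mat_def by auto
  with minv_unique[OF M] show "minv M \<in> carrier_mat n n" "M * minv M = 1\<^sub>m n" "minv M * M = 1\<^sub>m n"
    by auto
qed

lemma minv_kron_one:
  assumes P: "P \<in> carrier_mat n n" and "det P \<noteq> 0"
  shows "minv (kron (1\<^sub>m m) P) = kron (1\<^sub>m m) (minv P)"
proof (rule minv_unique)
  note Pinv = minv_mult[OF assms]
  show "kron (1\<^sub>m m) P * kron (1\<^sub>m m) (minv P) = 1\<^sub>m (m * n)"
    using kron_mult[OF one_carrier_mat one_carrier_mat P Pinv(1)] by (simp add: Pinv kron_one_one)
  show "kron (1\<^sub>m m) (minv P) * kron (1\<^sub>m m) P = 1\<^sub>m (m * n)"
    using kron_mult[OF one_carrier_mat one_carrier_mat Pinv(1) P] by (simp add: Pinv kron_one_one)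
qed (use assms minv_mult(1)[OF assms] in auto)

lemma scalar_prod_self_sum: "x \<in> carrier_vec n \<Longrightarrow> x \<bullet> x = (\<Sum>i<n. (x $ i)\<^sup>2 :: real)"
  unfolding scalar_prod_def power2_eq_square by (simp add: lessThan_atLeast0)

lemma scalar_prod_self_nonneg: "0 \<le> x \<bullet> (x :: real vec)"
  by (simp add: scalar_prod_def sum_nonneg)

lemma index_sq_le_scalar_prod_self: "x \<in> carrier_vec n \<Longrightarrow> i < n \<Longrightarrow> (x $ i)\<^sup>2 \<le> x \<bullet> (x :: real vec)"
  unfolding scalar_prod_self_sum by (rule member_le_sum) auto

lemma quadratic_form_sum:
  "M \<in> carrier_mat n n \<Longrightarrow> x \<in> carrier_vec n \<Longrightarrow>
   x \<bullet> (M *\<^sub>v x) = (\<Sum>i<n. \<Sum>j<n. x $ i * M $$ (i, j) * x $ j)"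
  by (simp add: scalar_prod_def index_mult_mat_vec_sum lessThan_atLeast0 sum_distrib_left mult.assoc
      del: index_mult_mat_vec)

lemma quadratic_form_congruence:
  assumes G: "(G :: real mat) \<in> carrier_mat a b" and X: "X \<in> carrier_mat a a" and w: "w \<in> carrier_vec b"
  shows "w \<bullet> ((transpose_mat G * X * G) *\<^sub>v w) = (G *\<^sub>v w) \<bullet> (X *\<^sub>v (G *\<^sub>v w))"
proof -
  have GT: "transpose_mat G \<in> carrier_mat b a" using G by simp
  have XGw: "X *\<^sub>v (G *\<^sub>v w) \<in> carrier_vec a" using X G w by simp
  have "(transpose_mat G * X * G) *\<^sub>v w = transpose_mat G *\<^sub>v (X *\<^sub>v (G *\<^sub>v w))"
    using assoc_mult_mat_vec[OF mult_carrier_mat[OF GT X] G w] assoc_mult_mat_vec[OF GT X] G w by simp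
  then show ?thesis
    using comm_scalar_prod[OF w, of "transpose_mat G *\<^sub>v (X *\<^sub>v (G *\<^sub>v w))"] GT XGw
      transpose_vec_mult_scalar[OF G w XGw] comm_scalar_prod[OF XGw, of "G *\<^sub>v w"] G w
    by simp
qed

lemma quadratic_form_upper_bound:
  assumes M: "(M :: real mat) \<in> carrier_mat n n"
  shows "\<exists>C>0. \<forall>x\<in>carrier_vec n. x \<bullet> (M *\<^sub>v x) \<le> C * (x \<bullet> x)"
proof (intro exI conjI ballI)
  define C where "C = 1 + (\<Sum>i<n. \<Sum>j<n. \<bar>M $$ (i, j)\<bar>)"
  show "C > 0" unfolding C_def by (simp add: add_pos_nonneg sum_nonneg)
  fix x :: "real vec" assume x: "x \<in> carrier_vec n"
  have entry: "x $ i * M $$ (i, j) * x $ j \<le> \<bar>M $$ (i, j)\<bar> * (x \<bullet> x)" if "i < n" "j < n" for i j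
  proof -
    have "2 * (\<bar>x $ i\<bar> * \<bar>x $ j\<bar>) \<le> (x $ i)\<^sup>2 + (x $ j)\<^sup>2"
      using sum_squares_bound[of "\<bar>x $ i\<bar>" "\<bar>x $ j\<bar>"] by (simp add: power2_eq_square)
    then have "\<bar>x $ i\<bar> * \<bar>x $ j\<bar> \<le> x \<bullet> x"
      using index_sq_le_scalar_prod_self[OF x that(1)] index_sq_le_scalar_prod_self[OF x that(2)] by linarith
    have "x $ i * M $$ (i, j) * x $ j \<le> \<bar>x $ i * M $$ (i, j) * x $ j\<bar>" by (rule abs_ge_self)
    also have "\<dots> = \<bar>M $$ (i, j)\<bar> * (\<bar>x $ i\<bar> * \<bar>x $ j\<bar>)" by (simp add: abs_mult mult_ac)
    also have "\<dots> \<le> \<bar>M $$ (i, j)\<bar> * (x \<bullet> x)"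
      using \<open>\<bar>x $ i\<bar> * \<bar>x $ j\<bar> \<le> x \<bullet> x\<close> by (simp add: mult_left_mono)
    finally show ?thesis .
  qed
  have "x \<bullet> (M *\<^sub>v x) \<le> (\<Sum>i<n. \<Sum>j<n. \<bar>M $$ (i, j)\<bar> * (x \<bullet> x))"
    unfolding quadratic_form_sum[OF M x] using entry by (intro sum_mono) auto
  also have "\<dots> \<le> C * (x \<bullet> x)"
    unfolding C_def using scalar_prod_self_nonneg[of x] by (simp add: sum_distrib_right[symmetric] distrib_right)
  finally show "x \<bullet> (M *\<^sub>v x) \<le> C * (x \<bullet> x)" .
qed

text \<open>The unit sphere, as a set of coordinate functions \<open>nat \<Rightarrow> real\<close>, is compact in the
  product topology as a closed subset of a product of intervals.\<close>

lemma compact_coordinate_sphere: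
  fixes n :: nat
  shows "compact (PiE UNIV (\<lambda>i. if i < n then {-1..1} else {0 :: real}) \<inter> {f. (\<Sum>i<n. (f i)\<^sup>2) = 1})"
proof (rule compact_Int_closed)
  have "compact (PiE UNIV T)" if "\<forall>i. compact (T i)" for T :: "nat \<Rightarrow> real set"
    using that compactin_PiE[of "\<lambda>_. euclidean" UNIV T] unfolding euclidean_product_topology by simp
  then show "compact (PiE UNIV (\<lambda>i. if i < n then {-1..1} else {0 :: real}))" by simp
  have "continuous_on UNIV (\<lambda>f :: nat \<Rightarrow> real. f i)" for i by simp
  then show "closed {f :: nat \<Rightarrow> real. (\<Sum>i<n. (f i)\<^sup>2) = 1}"
    by (intro closed_Collect_eq continuous_intros)
qed

lemma pos_def_sphere_min:
  assumes M: "pos_def n M"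
  shows "\<exists>\<epsilon>>0. \<forall>x\<in>carrier_vec n. x \<bullet> x = 1 \<longrightarrow> \<epsilon> \<le> x \<bullet> (M *\<^sub>v x)"
proof -
  have Mc: "M \<in> carrier_mat n n" using M by (simp add: pos_def_def sym_mat_def)
  define K where "K = PiE UNIV (\<lambda>i. if i < n then {-1..1} else {0 :: real}) \<inter> {f. (\<Sum>i<n. (f i)\<^sup>2) = 1}"
  define q where "q f = (\<Sum>i<n. \<Sum>j<n. f i * M $$ (i, j) * f j)" for f :: "nat \<Rightarrow> real"
  have K: "compact K" unfolding K_def by (rule compact_coordinate_sphere)
  have coord: "continuous_on A (\<lambda>f :: nat \<Rightarrow> real. f i)" for A i
    by (rule continuous_on_subset[of UNIV]) simp_all
  have q: "continuous_on K q" unfolding q_def by (intro continuous_intros coord)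
  have on_K: "(\<lambda>i. if i < n then x $ i else 0) \<in> K \<and> x \<bullet> (M *\<^sub>v x) = q (\<lambda>i. if i < n then x $ i else 0)"
    if x: "x \<in> carrier_vec n" "x \<bullet> x = 1" for x
  proof -
    have "-1 \<le> x $ i \<and> x $ i \<le> 1" if "i < n" for i
      using index_sq_le_scalar_prod_self[OF x(1) that] x(2) abs_le_square_iff[of "x $ i" 1] by auto
    then show ?thesis
      using x by (auto simp: K_def q_def PiE_UNIV_domain quadratic_form_sum[OF Mc] scalar_prod_self_sum)
  qed
  show ?thesis
  proof (cases "K = {}")
    case True
    then show ?thesis using on_K by (intro exI[of _ 1]) auto
  next
    case False
    obtain f0 where f0: "f0 \<in> K" and min: "\<And>f. f \<in> K \<Longrightarrow> q f0 \<le> q f"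
      using continuous_attains_inf[OF K False q] by blast
    define v0 where "v0 = vec n f0"
    have v0: "v0 \<in> carrier_vec n" "v0 \<bullet> v0 = 1"
      using f0 by (simp_all add: v0_def K_def scalar_prod_self_sum)
    then have "v0 \<noteq> 0\<^sub>v n" by auto
    moreover have "v0 \<bullet> (M *\<^sub>v v0) = q f0"
      unfolding quadratic_form_sum[OF Mc v0(1)] q_def by (intro sum.cong refl) (simp add: v0_def)
    ultimately have "0 < q f0"
      using M v0 unfolding pos_def_def by metis
    moreover have "q f0 \<le> x \<bullet> (M *\<^sub>v x)" if "x \<in> carrier_vec n" "x \<bullet> x = 1" for x
      using on_K[OF that] min by simp
    ultimately show ?thesis by blast
  qed
qed

lemma pos_def_lower_bound:
  assumes M: "pos_def n M"
  shows "\<exists>\<epsilon>>0. \<forall>x\<in>carrier_vec n. \<epsilon> * (x \<bullet> x) \<le> x \<bullet> (M *\<^sub>v x)"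
proof -
  have Mc: "M \<in> carrier_mat n n" using M by (simp add: pos_def_def sym_mat_def)
  obtain \<epsilon> where "\<epsilon> > 0" and sphere: "\<And>x. x \<in> carrier_vec n \<Longrightarrow> x \<bullet> x = 1 \<Longrightarrow> \<epsilon> \<le> x \<bullet> (M *\<^sub>v x)"
    using pos_def_sphere_min[OF M] by blast
  have "\<epsilon> * (x \<bullet> x) \<le> x \<bullet> (M *\<^sub>v x)" if x: "x \<in> carrier_vec n" for x
  proof (cases "x \<bullet> x = 0")
    case True
    have "0 \<le> x \<bullet> (M *\<^sub>v x)"
    proof (cases "x = 0\<^sub>v n")
      case False
      then show ?thesis using M x unfolding pos_def_def by (simp add: less_imp_le)
    qed (use Mc in simp)
    then show ?thesis using True by simp
  next
    case False
    define s where "s = 1 / sqrt (x \<bullet> x)"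
    have "0 < x \<bullet> x" using False scalar_prod_self_nonneg[of x] by simp
    then have s2: "s * s = 1 / (x \<bullet> x)" unfolding s_def by simp
    have "\<epsilon> \<le> (s \<cdot>\<^sub>v x) \<bullet> (M *\<^sub>v (s \<cdot>\<^sub>v x))"
      using x Mc s2 \<open>0 < x \<bullet> x\<close> by (intro sphere) (simp_all add: mult_mat_vec mult.assoc[symmetric])
    also have "\<dots> = (x \<bullet> (M *\<^sub>v x)) / (x \<bullet> x)"
      using x Mc s2 by (simp add: mult_mat_vec mult.assoc[symmetric])
    finally show ?thesis
      using \<open>0 < x \<bullet> x\<close> by (simp add: pos_le_divide_eq)
  qed
  then show ?thesis using \<open>\<epsilon> > 0\<close> by blast
qed

lemma pos_def_carrier: "pos_def n M \<Longrightarrow> M \<in> carrier_mat n n"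
  by (simp add: pos_def_def sym_mat_def)

lemma pos_def_quadratic_form_nonneg:
  assumes "pos_def n M" "x \<in> carrier_vec n"
  shows "0 \<le> x \<bullet> (M *\<^sub>v x)"
proof (cases "x = 0\<^sub>v n")
  case False
  then show ?thesis using assms unfolding pos_def_def by (simp add: less_imp_le)
qed (use pos_def_carrier[OF assms(1)] in simp)

lemma pos_def_det_nonzero:
  assumes P: "pos_def n P"
  shows "det P \<noteq> 0"
proof
  assume "det P = 0"
  then obtain v where v: "v \<in> carrier_vec n" "v \<noteq> 0\<^sub>v n" "P *\<^sub>v v = 0\<^sub>v n"
    using det_0_iff_vec_prod_zero[OF pos_def_carrier[OF P]] by blast
  then have "0 < v \<bullet> (P *\<^sub>v v)" using P unfolding pos_def_def by blast
  with v show False by simp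
qed

lemma pos_def_minv:
  assumes P: "pos_def n P"
  shows "pos_def n (minv P)"
proof -
  have Pc: "P \<in> carrier_mat n n" and PT: "transpose_mat P = P"
    using P by (simp_all add: pos_def_def sym_mat_def)
  note Pinv = minv_mult[OF Pc pos_def_det_nonzero[OF P]]
  have "minv P = transpose_mat (minv P)"
  proof (rule minv_unique[OF Pc])
    show "P * transpose_mat (minv P) = 1\<^sub>m n"
      using transpose_mult[OF Pinv(1) Pc] Pinv PT by simp
    show "transpose_mat (minv P) * P = 1\<^sub>m n"
      using transpose_mult[OF Pc Pinv(1)] Pinv PT by simp
  qed (use Pinv in simp)
  moreover have "0 < x \<bullet> (minv P *\<^sub>v x)" if x: "x \<in> carrier_vec n" "x \<noteq> 0\<^sub>v n" for x
  proof -
    define y where "y = minv P *\<^sub>v x"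
    have y: "y \<in> carrier_vec n" and Py: "P *\<^sub>v y = x"
      using Pinv Pc x by (simp_all add: y_def assoc_mult_mat_vec[symmetric, of P n n])
    then have "y \<noteq> 0\<^sub>v n" using x Pc by auto
    then have "0 < y \<bullet> (P *\<^sub>v y)" using P y unfolding pos_def_def by blast
    also have "y \<bullet> (P *\<^sub>v y) = x \<bullet> y"
      using y x(1) by (simp add: comm_scalar_prod[of y n] Py)
    finally show ?thesis unfolding y_def .
  qed
  ultimately show ?thesis using Pinv(1) by (simp add: pos_def_def sym_mat_def)
qed

lemma minv_quadratic_form:
  assumes P: "pos_def n P" and x: "x \<in> carrier_vec n"
  shows "P *\<^sub>v (minv P *\<^sub>v x) = x"
    and "x \<bullet> (minv P *\<^sub>v x) = (minv P *\<^sub>v x) \<bullet> (P *\<^sub>v (minv P *\<^sub>v x))"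
proof -
  have Pc: "P \<in> carrier_mat n n" using P by (rule pos_def_carrier)
  note Pinv = minv_mult[OF Pc pos_def_det_nonzero[OF P]]
  show Py: "P *\<^sub>v (minv P *\<^sub>v x) = x"
    using Pinv x by (simp add: assoc_mult_mat_vec[symmetric, OF Pc Pinv(1) x])
  show "x \<bullet> (minv P *\<^sub>v x) = (minv P *\<^sub>v x) \<bullet> (P *\<^sub>v (minv P *\<^sub>v x))"
    unfolding Py using Pinv(1) x by (simp add: comm_scalar_prod[OF x])
qed

section \<open>Quadratic Lyapunov functions for LPV systems\<close>

text \<open>A strict dissipation inequality for the pair \<open>(P, M P)\<close> makes
  \<open>x \<mapsto> x\<^sup>T P\<^sup>-\<^sup>1 x\<close> a Lyapunov function for \<open>M\<close>; it is tested with
  \<open>v\<^sub>1 = -P\<^sup>-\<^sup>1 M x\<close> and \<open>v\<^sub>2 = P\<^sup>-\<^sup>1 x\<close>.\<close>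

lemma lyapunov_decrease_of_dissipation:
  assumes P: "pos_def n P" and M: "M \<in> carrier_mat n n" and \<epsilon>: "0 < \<epsilon>" and C: "0 < C"
    and upper: "\<forall>y\<in>carrier_vec n. y \<bullet> (P *\<^sub>v y) \<le> C * (y \<bullet> y)"
    and diss: "\<forall>v1\<in>carrier_vec n. \<forall>v2\<in>carrier_vec n.
                 \<epsilon> * (v1 \<bullet> v1 + v2 \<bullet> v2) \<le> v1 \<bullet> (P *\<^sub>v v1) + v2 \<bullet> (P *\<^sub>v v2) + 2 * (v1 \<bullet> (M *\<^sub>v (P *\<^sub>v v2)))"
    and x: "x \<in> carrier_vec n"
  shows "(M *\<^sub>v x) \<bullet> (minv P *\<^sub>v (M *\<^sub>v x)) \<le> (1 - \<epsilon> / C) * (x \<bullet> (minv P *\<^sub>v x))"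
proof -
  have Pc: "P \<in> carrier_mat n n" using P by (rule pos_def_carrier)
  note Pinv = minv_mult[OF Pc pos_def_det_nonzero[OF P]]
  have Mx: "M *\<^sub>v x \<in> carrier_vec n" using M x by simp
  define y y1 where "y = minv P *\<^sub>v x" and "y1 = minv P *\<^sub>v (M *\<^sub>v x)"
  have y: "y \<in> carrier_vec n" and y1: "y1 \<in> carrier_vec n"
    using Pinv(1) x Mx by (simp_all add: y_def y1_def)
  have Py: "P *\<^sub>v y = x" and Py1: "P *\<^sub>v y1 = M *\<^sub>v x"
    unfolding y_def y1_def using minv_quadratic_form(1)[OF P] x Mx by simp_all
  have V: "x \<bullet> (minv P *\<^sub>v x) = y \<bullet> x" "(M *\<^sub>v x) \<bullet> (minv P *\<^sub>v (M *\<^sub>v x)) = y1 \<bullet> (M *\<^sub>v x)"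
    unfolding y_def[symmetric] y1_def[symmetric] using x y Mx y1 by (simp_all add: comm_scalar_prod[of _ n])
  have "\<epsilon> * ((-1 \<cdot>\<^sub>v y1) \<bullet> (-1 \<cdot>\<^sub>v y1) + y \<bullet> y)
      \<le> (-1 \<cdot>\<^sub>v y1) \<bullet> (P *\<^sub>v (-1 \<cdot>\<^sub>v y1)) + y \<bullet> (P *\<^sub>v y) + 2 * ((-1 \<cdot>\<^sub>v y1) \<bullet> (M *\<^sub>v (P *\<^sub>v y)))"
    using y y1 by (intro diss[rule_format]) auto
  also have "(-1 \<cdot>\<^sub>v y1) \<bullet> (P *\<^sub>v (-1 \<cdot>\<^sub>v y1)) = y1 \<bullet> (M *\<^sub>v x)"
    using y1 Pc Mx by (simp add: mult_mat_vec Py1)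
  also have "(-1 \<cdot>\<^sub>v y1) \<bullet> (M *\<^sub>v (P *\<^sub>v y)) = - (y1 \<bullet> (M *\<^sub>v x))"
    using y1 Mx by (simp add: Py)
  also have "(-1 \<cdot>\<^sub>v y1) \<bullet> (-1 \<cdot>\<^sub>v y1) = y1 \<bullet> y1"
    using y1 by simp
  finally have "\<epsilon> * (y1 \<bullet> y1 + y \<bullet> y)
      \<le> x \<bullet> (minv P *\<^sub>v x) - (M *\<^sub>v x) \<bullet> (minv P *\<^sub>v (M *\<^sub>v x))"
    unfolding V Py by simp
  moreover have "\<epsilon> * (y \<bullet> y) \<le> \<epsilon> * (y1 \<bullet> y1 + y \<bullet> y)"
    using \<epsilon> scalar_prod_self_nonneg[of y1] by simp
  moreover have "\<epsilon> / C * (x \<bullet> (minv P *\<^sub>v x)) \<le> \<epsilon> * (y \<bullet> y)"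
  proof -
    have "x \<bullet> (minv P *\<^sub>v x) \<le> C * (y \<bullet> y)"
      using upper[rule_format, OF y] V(1) Py by simp
    then show ?thesis using \<epsilon> C by (simp add: divide_le_eq mult.commute mult_left_mono)
  qed
  ultimately show ?thesis by (simp add: algebra_simps)
qed

lemma cl_traj_carrier:
  "\<forall>p\<in>S. Acl p \<in> carrier_mat n n \<Longrightarrow> \<forall>k. ps k \<in> S \<Longrightarrow> x0 \<in> carrier_vec n \<Longrightarrow>
   cl_traj Acl ps x0 k \<in> carrier_vec n"
  by (induction k) (auto intro!: mult_mat_vec_carrier[of _ n n])

lemma vnorm_nonneg: "0 \<le> vnorm x"
  by (simp add: vnorm_def scalar_prod_self_nonneg)

lemma asymp_stable_LPV_of_exponential_bound:
  assumes r: "0 \<le> r" "r < 1" and R: "0 \<le> R"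
    and bound: "\<And>ps x0 k. \<forall>k. ps k \<in> S \<Longrightarrow> x0 \<in> carrier_vec n \<Longrightarrow>
                  vnorm (cl_traj Acl ps x0 k) \<le> R * r ^ k * vnorm x0"
  shows "asymp_stable_LPV n S Acl"
  unfolding asymp_stable_LPV_def
proof (rule allI, rule impI, rule conjI)
  fix ps :: "nat \<Rightarrow> real vec" assume ps: "\<forall>k. ps k \<in> S"
  show "\<forall>\<epsilon>>0. \<exists>\<delta>>0. \<forall>x0\<in>carrier_vec n. vnorm x0 < \<delta> \<longrightarrow> (\<forall>k. vnorm (cl_traj Acl ps x0 k) < \<epsilon>)"
  proof (intro allI impI)
    fix \<epsilon> :: real assume "0 < \<epsilon>"
    have "vnorm (cl_traj Acl ps x0 k) < \<epsilon>"
      if "x0 \<in> carrier_vec n" "vnorm x0 < \<epsilon> / (R + 1)" for x0 k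
    proof -
      have "vnorm (cl_traj Acl ps x0 k) \<le> R * r ^ k * vnorm x0"
        using bound[OF ps that(1)] .
      also have "\<dots> \<le> R * vnorm x0"
        using mult_left_le_one_le[of "R * vnorm x0" "r ^ k"] r R vnorm_nonneg[of x0]
        by (simp add: power_le_one mult_ac)
      also have "\<dots> \<le> (R + 1) * vnorm x0" using vnorm_nonneg[of x0] by (simp add: distrib_right)
      also have "\<dots> < \<epsilon>" using that(2) R by (simp add: less_divide_eq mult.commute)
      finally show ?thesis .
    qed
    moreover have "0 < \<epsilon> / (R + 1)" using \<open>0 < \<epsilon>\<close> R by simp
    ultimately show "\<exists>\<delta>>0. \<forall>x0\<in>carrier_vec n. vnorm x0 < \<delta> \<longrightarrow> (\<forall>k. vnorm (cl_traj Acl ps x0 k) < \<epsilon>)"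
      by blast
  qed
  have "(\<lambda>k. vnorm (cl_traj Acl ps x0 k)) \<longlonglongrightarrow> 0" if "x0 \<in> carrier_vec n" for x0
  proof (rule real_tendsto_sandwich[of "\<lambda>_. 0" _ _ "\<lambda>k. R * r ^ k * vnorm x0"])
    show "(\<lambda>k. R * r ^ k * vnorm x0) \<longlonglongrightarrow> 0"
      using LIMSEQ_power_zero[of r] r by (intro tendsto_mult_right_zero tendsto_mult_left_zero) auto
  qed (use bound[OF ps that] vnorm_nonneg in auto)
  then show "\<exists>\<eta>>0. \<forall>x0\<in>carrier_vec n. vnorm x0 < \<eta> \<longrightarrow> (\<lambda>k. vnorm (cl_traj Acl ps x0 k)) \<longlonglongrightarrow> 0"
    by (intro exI[of _ 1]) auto
qed

lemma cl_traj_quadratic_decay: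
  assumes Acl: "\<forall>p\<in>S. Acl p \<in> carrier_mat n n" and Q: "pos_def n Q"
    and contr: "\<forall>p\<in>S. \<forall>x\<in>carrier_vec n. (Acl p *\<^sub>v x) \<bullet> (Q *\<^sub>v (Acl p *\<^sub>v x)) \<le> \<rho> * (x \<bullet> (Q *\<^sub>v x))"
    and ps: "\<forall>k. ps k \<in> S" and x0: "x0 \<in> carrier_vec n"
  shows "cl_traj Acl ps x0 k \<bullet> (Q *\<^sub>v cl_traj Acl ps x0 k) \<le> max 0 \<rho> ^ k * (x0 \<bullet> (Q *\<^sub>v x0))"
proof (induction k)
  case (Suc k)
  note traj = cl_traj_carrier[OF Acl ps x0, of k]
  have "cl_traj Acl ps x0 (Suc k) \<bullet> (Q *\<^sub>v cl_traj Acl ps x0 (Suc k))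
      \<le> \<rho> * (cl_traj Acl ps x0 k \<bullet> (Q *\<^sub>v cl_traj Acl ps x0 k))"
    using contr ps traj by simp
  also have "\<dots> \<le> max 0 \<rho> * (cl_traj Acl ps x0 k \<bullet> (Q *\<^sub>v cl_traj Acl ps x0 k))"
    using pos_def_quadratic_form_nonneg[OF Q traj] by (simp add: mult_right_mono)
  also have "\<dots> \<le> max 0 \<rho> * (max 0 \<rho> ^ k * (x0 \<bullet> (Q *\<^sub>v x0)))" using Suc by (simp add: mult_left_mono)
  finally show ?case by simp
qed simp

lemma asymp_stable_LPV_of_quadratic_contraction:
  assumes Acl: "\<forall>p\<in>S. Acl p \<in> carrier_mat n n" and Q: "pos_def n Q" and "\<rho> < 1"
    and contr: "\<forall>p\<in>S. \<forall>x\<in>carrier_vec n. (Acl p *\<^sub>v x) \<bullet> (Q *\<^sub>v (Acl p *\<^sub>v x)) \<le> \<rho> * (x \<bullet> (Q *\<^sub>v x))"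
  shows "asymp_stable_LPV n S Acl"
proof -
  define V where "V x = x \<bullet> (Q *\<^sub>v x)" for x
  define r where "r = max 0 \<rho>"
  obtain c where c: "0 < c" "\<And>x. x \<in> carrier_vec n \<Longrightarrow> c * (x \<bullet> x) \<le> V x"
    using pos_def_lower_bound[OF Q] unfolding V_def by blast
  obtain C where C: "0 < C" "\<And>x. x \<in> carrier_vec n \<Longrightarrow> V x \<le> C * (x \<bullet> x)"
    using quadratic_form_upper_bound[OF pos_def_carrier[OF Q]] unfolding V_def by blast
  have "vnorm (cl_traj Acl ps x0 k) \<le> sqrt (C / c) * sqrt r ^ k * vnorm x0"
    if ps: "\<forall>k. ps k \<in> S" and x0: "x0 \<in> carrier_vec n" for ps x0 k
  proof -
    note traj = cl_traj_carrier[OF Acl ps x0]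
    have "c * (cl_traj Acl ps x0 k \<bullet> cl_traj Acl ps x0 k) \<le> V (cl_traj Acl ps x0 k)"
      using c(2)[OF traj[of k]] .
    also have "\<dots> \<le> r ^ k * V x0"
      unfolding V_def r_def by (rule cl_traj_quadratic_decay[OF Acl Q contr ps x0])
    also have "\<dots> \<le> r ^ k * (C * (x0 \<bullet> x0))" using C(2)[OF x0] by (simp add: r_def mult_left_mono)
    finally have "cl_traj Acl ps x0 k \<bullet> cl_traj Acl ps x0 k \<le> C / c * r ^ k * (x0 \<bullet> x0)"
      using c(1) by (simp add: field_simps)
    then have "sqrt (cl_traj Acl ps x0 k \<bullet> cl_traj Acl ps x0 k) \<le> sqrt (C / c * r ^ k * (x0 \<bullet> x0))"
      by (rule real_sqrt_le_mono)
    also have "\<dots> = sqrt (C / c) * sqrt r ^ k * sqrt (x0 \<bullet> x0)"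
      by (simp only: real_sqrt_mult real_sqrt_power)
    finally show ?thesis unfolding vnorm_def .
  qed
  moreover have "sqrt r < 1" using \<open>\<rho> < 1\<close> by (simp add: r_def)
  ultimately show ?thesis
    using c(1) C(1)
    by (intro asymp_stable_LPV_of_exponential_bound[of "sqrt r" "sqrt (C / c)"]) (auto simp: r_def)
qed

lemma asymp_stable_LPV_of_dissipation:
  assumes P: "pos_def n P" and Acl: "\<forall>p\<in>S. Acl p \<in> carrier_mat n n" and \<epsilon>: "0 < \<epsilon>"
    and diss: "\<forall>p\<in>S. \<forall>v1\<in>carrier_vec n. \<forall>v2\<in>carrier_vec n.
                 \<epsilon> * (v1 \<bullet> v1 + v2 \<bullet> v2) \<le> v1 \<bullet> (P *\<^sub>v v1) + v2 \<bullet> (P *\<^sub>v v2) + 2 * (v1 \<bullet> (Acl p *\<^sub>v (P *\<^sub>v v2)))"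
  shows "asymp_stable_LPV n S Acl"
proof -
  obtain C where "0 < C" and upper: "\<forall>y\<in>carrier_vec n. y \<bullet> (P *\<^sub>v y) \<le> C * (y \<bullet> y)"
    using quadratic_form_upper_bound[OF pos_def_carrier[OF P]] by blast
  have "\<forall>p\<in>S. \<forall>x\<in>carrier_vec n.
      (Acl p *\<^sub>v x) \<bullet> (minv P *\<^sub>v (Acl p *\<^sub>v x)) \<le> (1 - \<epsilon> / C) * (x \<bullet> (minv P *\<^sub>v x))"
    using lyapunov_decrease_of_dissipation[OF P _ \<epsilon> \<open>0 < C\<close> upper] diss Acl by blast
  then show ?thesis
    by (rule asymp_stable_LPV_of_quadratic_contraction[OF Acl pos_def_minv[OF P], rotated])
       (use \<epsilon> \<open>0 < C\<close> in simp)
qed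

section \<open>The full-block S-procedure\<close>

text \<open>The matrices \<open>M\<^sub>1\<close>, \<open>M\<^sub>2\<close> and \<open>[I; \<Delta>(p)]\<close> of the full-block LMI conditions, with
  \<open>\<Delta>(p) = diag(p) \<otimes> I\<^sub>2\<^sub>n\<^sub>x\<close>.\<close>

definition fbsp_M1 :: "nat \<Rightarrow> nat \<Rightarrow> real mat" where
  "fbsp_M1 nx np = (0\<^sub>m (2 * nx * np) (2 * nx * np) @\<^sub>h kron (ones np) (1\<^sub>m (2 * nx)))
                   @\<^sub>r (1\<^sub>m (2 * nx * np) @\<^sub>h 0\<^sub>m (2 * nx * np) (2 * nx))"

definition fbsp_M2 :: "nat \<Rightarrow> nat \<Rightarrow> real mat" where
  "fbsp_M2 nx np =
     (0\<^sub>m nx (2 * nx * np) @\<^sub>r kron (1\<^sub>m np) (1\<^sub>m nx @\<^sub>h 0\<^sub>m nx nx)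
        @\<^sub>r 0\<^sub>m nx (2 * nx * np) @\<^sub>r kron (1\<^sub>m np) (0\<^sub>m nx nx @\<^sub>h 1\<^sub>m nx))
     @\<^sub>h ((1\<^sub>m nx @\<^sub>h 0\<^sub>m nx nx) @\<^sub>r kron (ones np) (0\<^sub>m nx (2 * nx))
        @\<^sub>r (0\<^sub>m nx nx @\<^sub>h 1\<^sub>m nx) @\<^sub>r kron (ones np) (0\<^sub>m nx (2 * nx)))"

definition fbsp_G :: "nat \<Rightarrow> nat \<Rightarrow> real vec \<Rightarrow> real mat" where
  "fbsp_G nx np p = 1\<^sub>m (2 * nx * np) @\<^sub>r kron (diagm p) (1\<^sub>m (2 * nx))"

lemma fbsp_M1_carrier: "fbsp_M1 nx np \<in> carrier_mat (4 * np * nx) (2 * nx * np + 2 * nx)"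
proof -
  have "kron (ones np) (1\<^sub>m (2 * nx)) \<in> carrier_mat (2 * nx * np) (2 * nx)"
    using kron_colmat_one_carrier[of "vec np (\<lambda>_. 1)" np "2 * nx"]
    by (simp add: colmat_ones mult.commute[of np "2 * nx"])
  then have "fbsp_M1 nx np \<in> carrier_mat (2 * nx * np + 2 * nx * np) (2 * nx * np + 2 * nx)"
    unfolding fbsp_M1_def by (intro carrier_append_rows hcat_carrier) auto
  then show ?thesis by (simp add: algebra_simps)
qed

lemma fbsp_G_carrier: "p \<in> carrier_vec np \<Longrightarrow> fbsp_G nx np p \<in> carrier_mat (4 * np * nx) (2 * nx * np)"
proof -
  assume p: "p \<in> carrier_vec np"
  then have "kron (diagm p) (1\<^sub>m (2 * nx)) \<in> carrier_mat (2 * nx * np) (2 * nx * np)"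
    using kron_carrier_mat[of "diagm p" "1\<^sub>m (2 * nx)"] by (simp add: diagm_def mult.commute)
  then have "fbsp_G nx np p \<in> carrier_mat (2 * nx * np + 2 * nx * np) (2 * nx * np)"
    unfolding fbsp_G_def by (intro carrier_append_rows) auto
  then show ?thesis by (simp add: algebra_simps)
qed

lemma fbsp_M1_mult_vec:
  assumes p: "p \<in> carrier_vec np" and v: "v \<in> carrier_vec (2 * nx)"
  shows "fbsp_M1 nx np *\<^sub>v (kron_vec p v @\<^sub>v v) = fbsp_G nx np p *\<^sub>v kron_vec (vec np (\<lambda>_. 1)) v"
proof -
  define ones_v where "ones_v = vec np (\<lambda>_. 1 :: real)"
  have o: "ones_v \<in> carrier_vec np" by (simp add: ones_v_def)
  have pv: "kron_vec p v \<in> carrier_vec (2 * nx * np)" using kron_vec_carrier[OF p v] by (simp add: mult.commute)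
  have ov: "kron_vec ones_v v \<in> carrier_vec (2 * nx * np)" using kron_vec_carrier[OF o v] by (simp add: mult.commute)
  have K1: "kron (ones np) (1\<^sub>m (2 * nx)) \<in> carrier_mat (2 * nx * np) (2 * nx)"
    using kron_colmat_one_carrier[OF o, of "2 * nx"] by (simp add: ones_v_def colmat_ones mult.commute[of np "2 * nx"])
  have K2: "kron (diagm p) (1\<^sub>m (2 * nx)) \<in> carrier_mat (2 * nx * np) (2 * nx * np)"
    using p kron_carrier_mat[of "diagm p" "1\<^sub>m (2 * nx)"] by (simp add: diagm_def mult.commute)
  have "kron (ones np) (1\<^sub>m (2 * nx)) *\<^sub>v v = kron_vec ones_v v"
    using kron_colmat_mult_vec[OF o one_carrier_mat v] v by (simp add: ones_v_def colmat_ones)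
  moreover have "0\<^sub>m (2 * nx * np) (2 * nx * np) @\<^sub>h kron (ones np) (1\<^sub>m (2 * nx))
      \<in> carrier_mat (2 * nx * np) (2 * nx * np + 2 * nx)"
    "1\<^sub>m (2 * nx * np) @\<^sub>h 0\<^sub>m (2 * nx * np) (2 * nx) \<in> carrier_mat (2 * nx * np) (2 * nx * np + 2 * nx)"
    using K1 by auto
  ultimately have "fbsp_M1 nx np *\<^sub>v (kron_vec p v @\<^sub>v v) = kron_vec ones_v v @\<^sub>v kron_vec p v"
    unfolding fbsp_M1_def using pv v K1 ov
    by (subst mat_mult_append) (auto simp: hcat_mult_vec[of _ "2 * nx * np" "2 * nx * np" _ "2 * nx"] zero_mat_mult_vec)
  moreover have "kron (diagm p) (1\<^sub>m (2 * nx)) *\<^sub>v kron_vec ones_v v = kron_vec p v"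
    using kron_mult_kron_vec[OF diagm_carrier[OF p] o one_carrier_mat v] v
    by (simp add: diagm_mult_ones[OF p, folded ones_v_def])
  ultimately show ?thesis
    unfolding fbsp_G_def ones_v_def[symmetric] using ov by (simp add: mat_mult_append[OF one_carrier_mat K2 ov])
qed

lemma fbsp_M2_blocks:
  shows "kron (1\<^sub>m np) (1\<^sub>m nx @\<^sub>h 0\<^sub>m nx nx) \<in> carrier_mat (np * nx) (2 * nx * np)"
    and "kron (1\<^sub>m np) (0\<^sub>m nx nx @\<^sub>h 1\<^sub>m nx) \<in> carrier_mat (np * nx) (2 * nx * np)"
    and "kron (ones np) (0\<^sub>m nx (2 * nx)) \<in> carrier_mat (np * nx) (2 * nx)"
    and "1\<^sub>m nx @\<^sub>h 0\<^sub>m nx nx \<in> carrier_mat nx (2 * nx)"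
    and "0\<^sub>m nx nx @\<^sub>h 1\<^sub>m nx \<in> carrier_mat nx (2 * nx)"
proof -
  have e: "np * (nx + nx) = 2 * nx * np" "nx + nx = 2 * nx" by simp_all
  have "1\<^sub>m nx @\<^sub>h 0\<^sub>m nx nx \<in> carrier_mat nx (nx + nx)" "0\<^sub>m nx nx @\<^sub>h 1\<^sub>m nx \<in> carrier_mat nx (nx + nx)"
    by auto
  then show "kron (1\<^sub>m np) (1\<^sub>m nx @\<^sub>h 0\<^sub>m nx nx) \<in> carrier_mat (np * nx) (2 * nx * np)"
    "kron (1\<^sub>m np) (0\<^sub>m nx nx @\<^sub>h 1\<^sub>m nx) \<in> carrier_mat (np * nx) (2 * nx * np)"
    "1\<^sub>m nx @\<^sub>h 0\<^sub>m nx nx \<in> carrier_mat nx (2 * nx)" "0\<^sub>m nx nx @\<^sub>h 1\<^sub>m nx \<in> carrier_mat nx (2 * nx)"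
    using kron_carrier_matI[OF one_carrier_mat[of np]] unfolding e by auto
  show "kron (ones np) (0\<^sub>m nx (2 * nx)) \<in> carrier_mat (np * nx) (2 * nx)"
    using kron_carrier_matI[OF colmat_carrier_mat[of "vec np (\<lambda>_. 1)" np] zero_carrier_mat[of nx "2 * nx"]]
    by (simp add: colmat_ones)
qed

lemma fbsp_M2_carrier: "fbsp_M2 nx np \<in> carrier_mat ((nx + np * nx) + (nx + np * nx)) (2 * nx * np + 2 * nx)"
proof -
  have "fbsp_M2 nx np \<in> carrier_mat (nx + (np * nx + (nx + np * nx))) (2 * nx * np + 2 * nx)"
    unfolding fbsp_M2_def using fbsp_M2_blocks by (intro hcat_carrier carrier_append_rows) auto
  then show ?thesis by (simp add: add.assoc)
qed

lemma fbsp_M2_mult_vec: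
  assumes p: "p \<in> carrier_vec np" and v1: "v1 \<in> carrier_vec nx" and v2: "v2 \<in> carrier_vec nx"
  shows "fbsp_M2 nx np *\<^sub>v (kron_vec p (v1 @\<^sub>v v2) @\<^sub>v (v1 @\<^sub>v v2))
       = (v1 @\<^sub>v kron_vec p v1) @\<^sub>v (v2 @\<^sub>v kron_vec p v2)"
proof -
  define v where "v = v1 @\<^sub>v v2"
  have v: "v \<in> carrier_vec (2 * nx)" and v': "v \<in> carrier_vec (nx + nx)" using v1 v2 by (simp_all add: v_def mult_2)
  have pv: "kron_vec p v \<in> carrier_vec (2 * nx * np)" using kron_vec_carrier[OF p v] by (simp add: mult.commute)
  have pv1: "kron_vec p v1 \<in> carrier_vec (np * nx)" and pv2: "kron_vec p v2 \<in> carrier_vec (np * nx)"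
    using p v1 v2 by (simp_all add: kron_vec_carrier)
  have I0: "(1\<^sub>m nx @\<^sub>h 0\<^sub>m nx nx) *\<^sub>v v = v1" and OI: "(0\<^sub>m nx nx @\<^sub>h 1\<^sub>m nx) *\<^sub>v v = v2"
    unfolding v_def using v1 v2 by (simp_all add: hcat_mult_vec[of _ nx nx _ nx] zero_mat_mult_vec)
  have "kron (ones np) (0\<^sub>m nx (2 * nx)) *\<^sub>v v = 0\<^sub>v (np * nx)"
    using kron_colmat_mult_vec[of "vec np (\<lambda>_. 1)" np "0\<^sub>m nx (2 * nx)" nx "2 * nx" v] v
    by (simp add: colmat_ones zero_mat_mult_vec kron_vec_zero)
  moreover have "kron (1\<^sub>m np) (1\<^sub>m nx @\<^sub>h 0\<^sub>m nx nx) *\<^sub>v kron_vec p v = kron_vec p v1"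
    "kron (1\<^sub>m np) (0\<^sub>m nx nx @\<^sub>h 1\<^sub>m nx) *\<^sub>v kron_vec p v = kron_vec p v2"
    using kron_one_mult_kron_vec[OF fbsp_M2_blocks(4) p v] kron_one_mult_kron_vec[OF fbsp_M2_blocks(5) p v]
    by (simp_all add: I0 OI)
  ultimately have L21: "(0\<^sub>m nx (2 * nx * np) @\<^sub>r kron (1\<^sub>m np) (1\<^sub>m nx @\<^sub>h 0\<^sub>m nx nx)
        @\<^sub>r 0\<^sub>m nx (2 * nx * np) @\<^sub>r kron (1\<^sub>m np) (0\<^sub>m nx nx @\<^sub>h 1\<^sub>m nx)) *\<^sub>v kron_vec p v
      = 0\<^sub>v nx @\<^sub>v kron_vec p v1 @\<^sub>v 0\<^sub>v nx @\<^sub>v kron_vec p v2"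
    and L22: "((1\<^sub>m nx @\<^sub>h 0\<^sub>m nx nx) @\<^sub>r kron (ones np) (0\<^sub>m nx (2 * nx))
        @\<^sub>r (0\<^sub>m nx nx @\<^sub>h 1\<^sub>m nx) @\<^sub>r kron (ones np) (0\<^sub>m nx (2 * nx))) *\<^sub>v v
      = v1 @\<^sub>v 0\<^sub>v (np * nx) @\<^sub>v v2 @\<^sub>v 0\<^sub>v (np * nx)"
    by (simp_all add: append_rows4_mult_vec[OF zero_carrier_mat fbsp_M2_blocks(1) zero_carrier_mat fbsp_M2_blocks(2) pv]
        append_rows4_mult_vec[OF fbsp_M2_blocks(4) fbsp_M2_blocks(3) fbsp_M2_blocks(5) fbsp_M2_blocks(3) v]
        zero_mat_mult_vec pv I0 OI)
  have "fbsp_M2 nx np *\<^sub>v (kron_vec p v @\<^sub>v v)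
      = (0\<^sub>v nx @\<^sub>v kron_vec p v1 @\<^sub>v 0\<^sub>v nx @\<^sub>v kron_vec p v2) + (v1 @\<^sub>v 0\<^sub>v (np * nx) @\<^sub>v v2 @\<^sub>v 0\<^sub>v (np * nx))"
    unfolding fbsp_M2_def L21[symmetric] L22[symmetric]
    by (rule hcat_mult_vec[of _ "nx + (np * nx + (nx + np * nx))"])
       (use fbsp_M2_blocks pv v in \<open>auto intro!: carrier_append_rows\<close>)
  also have "\<dots> = v1 @\<^sub>v kron_vec p v1 @\<^sub>v v2 @\<^sub>v kron_vec p v2"
    using v1 v2 pv1 pv2 by (simp add: append_vec_add[of _ nx _ _ "np * nx + (nx + np * nx)"]
        append_vec_add[of _ "np * nx" _ _ "nx + np * nx"] append_vec_add[of _ nx _ _ "np * nx"])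
  finally show ?thesis unfolding v_def append_vec_assoc .
qed

lemma fbsp_multiplier_term_nonneg:
  assumes Xi: "Xi \<in> carrier_mat (4 * np * nx) (4 * np * nx)" and p: "p \<in> carrier_vec np"
    and v: "v \<in> carrier_vec (2 * nx)"
    and G: "psd (2 * nx * np) (transpose_mat (fbsp_G nx np p) * Xi * fbsp_G nx np p)"
  shows "0 \<le> (kron_vec p v @\<^sub>v v) \<bullet> ((transpose_mat (fbsp_M1 nx np) * Xi * fbsp_M1 nx np) *\<^sub>v (kron_vec p v @\<^sub>v v))"
proof -
  define w where "w = kron_vec (vec np (\<lambda>_. 1)) v"
  have z: "kron_vec p v @\<^sub>v v \<in> carrier_vec (2 * nx * np + 2 * nx)"
    using kron_vec_carrier[OF p v] v by (simp add: mult.commute)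
  have w: "w \<in> carrier_vec (2 * nx * np)"
    unfolding w_def using kron_vec_carrier[OF _ v, of _ np] by (simp add: mult.commute)
  have "(kron_vec p v @\<^sub>v v) \<bullet> ((transpose_mat (fbsp_M1 nx np) * Xi * fbsp_M1 nx np) *\<^sub>v (kron_vec p v @\<^sub>v v))
      = (fbsp_G nx np p *\<^sub>v w) \<bullet> (Xi *\<^sub>v (fbsp_G nx np p *\<^sub>v w))"
    unfolding quadratic_form_congruence[OF fbsp_M1_carrier Xi z] w_def fbsp_M1_mult_vec[OF p v] ..
  also have "\<dots> = w \<bullet> ((transpose_mat (fbsp_G nx np p) * Xi * fbsp_G nx np p) *\<^sub>v w)"
    by (rule quadratic_form_congruence[OF fbsp_G_carrier[OF p] Xi w, symmetric])
  finally show ?thesis using G w unfolding psd_def by simp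
qed

text \<open>The full-block S-procedure: on vectors \<open>z = [p \<otimes> v; v]\<close> the multiplier term is
  nonnegative by the second LMI, so the strict first LMI bounds the \<open>W\<close>-term from below.\<close>

lemma full_block_S_procedure:
  assumes Xi: "Xi \<in> carrier_mat (4 * np * nx) (4 * np * nx)"
    and W: "W \<in> carrier_mat ((nx + np * nx) + (nx + np * nx)) ((nx + np * nx) + (nx + np * nx))"
    and LMI: "neg_def (2 * nx * np + 2 * nx)
               (transpose_mat (fbsp_M1 nx np) * Xi * fbsp_M1 nx np - transpose_mat (fbsp_M2 nx np) * W * fbsp_M2 nx np)"
  obtains \<epsilon> :: real where "0 < \<epsilon>"
    and "\<And>p v1 v2. p \<in> carrier_vec np \<Longrightarrow> psd (2 * nx * np) (transpose_mat (fbsp_G nx np p) * Xi * fbsp_G nx np p) \<Longrightarrow>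
           v1 \<in> carrier_vec nx \<Longrightarrow> v2 \<in> carrier_vec nx \<Longrightarrow>
           \<epsilon> * (v1 \<bullet> v1 + v2 \<bullet> v2)
             \<le> ((v1 @\<^sub>v kron_vec p v1) @\<^sub>v (v2 @\<^sub>v kron_vec p v2))
                \<bullet> (W *\<^sub>v ((v1 @\<^sub>v kron_vec p v1) @\<^sub>v (v2 @\<^sub>v kron_vec p v2)))"
proof -
  define n where "n = 2 * nx * np + 2 * nx"
  define T1 T2 where "T1 = transpose_mat (fbsp_M1 nx np) * Xi * fbsp_M1 nx np"
    and "T2 = transpose_mat (fbsp_M2 nx np) * W * fbsp_M2 nx np"
  have T: "T1 \<in> carrier_mat n n" "T2 \<in> carrier_mat n n"
    unfolding T1_def T2_def n_def
    by (rule mult_carrier_mat[OF mult_carrier_mat[OF _ Xi] fbsp_M1_carrier], simp add: fbsp_M1_carrier)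
       (rule mult_carrier_mat[OF mult_carrier_mat[OF _ W] fbsp_M2_carrier], simp add: fbsp_M2_carrier)
  obtain \<epsilon> where "0 < \<epsilon>" and margin: "\<And>z. z \<in> carrier_vec n \<Longrightarrow> \<epsilon> * (z \<bullet> z) \<le> z \<bullet> (- (T1 - T2) *\<^sub>v z)"
    using pos_def_lower_bound[OF LMI[unfolded neg_def_def, folded n_def T1_def T2_def]] by blast
  have "\<epsilon> * (v1 \<bullet> v1 + v2 \<bullet> v2)
          \<le> ((v1 @\<^sub>v kron_vec p v1) @\<^sub>v (v2 @\<^sub>v kron_vec p v2))
             \<bullet> (W *\<^sub>v ((v1 @\<^sub>v kron_vec p v1) @\<^sub>v (v2 @\<^sub>v kron_vec p v2)))"
    if p: "p \<in> carrier_vec np" and G: "psd (2 * nx * np) (transpose_mat (fbsp_G nx np p) * Xi * fbsp_G nx np p)"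
      and v1: "v1 \<in> carrier_vec nx" and v2: "v2 \<in> carrier_vec nx" for p v1 v2
  proof -
    define v where "v = v1 @\<^sub>v v2"
    define z where "z = kron_vec p v @\<^sub>v v"
    have v: "v \<in> carrier_vec (2 * nx)" unfolding v_def using v1 v2 by (simp add: mult_2)
    have pv: "kron_vec p v \<in> carrier_vec (2 * nx * np)" using kron_vec_carrier[OF p v] by (simp add: mult.commute)
    have z: "z \<in> carrier_vec n" unfolding z_def n_def using pv v by simp
    have "0 \<le> z \<bullet> (T1 *\<^sub>v z)" unfolding T1_def z_def by (rule fbsp_multiplier_term_nonneg[OF Xi p v G])
    moreover have "z \<bullet> (T2 *\<^sub>v z) = ((v1 @\<^sub>v kron_vec p v1) @\<^sub>v (v2 @\<^sub>v kron_vec p v2))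
        \<bullet> (W *\<^sub>v ((v1 @\<^sub>v kron_vec p v1) @\<^sub>v (v2 @\<^sub>v kron_vec p v2)))"
      unfolding T2_def quadratic_form_congruence[OF fbsp_M2_carrier W z[unfolded n_def]]
      unfolding z_def v_def fbsp_M2_mult_vec[OF p v1 v2] ..
    moreover have "z \<bullet> (- (T1 - T2) *\<^sub>v z) = z \<bullet> (T2 *\<^sub>v z) - z \<bullet> (T1 *\<^sub>v z)"
      using T z by (simp add: minus_mult_distrib_mat_vec scalar_prod_minus_distrib[of _ n])
    moreover have "v1 \<bullet> v1 + v2 \<bullet> v2 \<le> z \<bullet> z"
      using pv v v1 v2 scalar_prod_self_nonneg[of "kron_vec p v"]
      by (simp add: z_def v_def scalar_prod_append[of _ "2 * nx * np" _ "2 * nx"] scalar_prod_append[OF v1 v2 v1 v2])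
    moreover have "\<epsilon> * (v1 \<bullet> v1 + v2 \<bullet> v2) \<le> \<epsilon> * (z \<bullet> z)"
      using \<open>v1 \<bullet> v1 + v2 \<bullet> v2 \<le> z \<bullet> z\<close> \<open>0 < \<epsilon>\<close> by (simp add: mult_left_mono)
    ultimately show ?thesis
      using margin[OF z] by linarith
  qed
  with \<open>0 < \<epsilon>\<close> that show ?thesis by blast
qed

lemma lyapunov_block_quadratic_form:
  assumes P: "P \<in> carrier_mat n n" and X: "X \<in> carrier_mat (n + m) (n + m)"
    and v1: "v1 \<in> carrier_vec n" and v2: "v2 \<in> carrier_vec n"
    and w1: "w1 \<in> carrier_vec m" and w2: "w2 \<in> carrier_vec m"
  defines "P0 \<equiv> blkdiag P (0\<^sub>m m m)" and "a1 \<equiv> v1 @\<^sub>v w1" and "a2 \<equiv> v2 @\<^sub>v w2"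
  shows "(a1 @\<^sub>v a2) \<bullet> (((P0 @\<^sub>h X) @\<^sub>r (transpose_mat X @\<^sub>h P0)) *\<^sub>v (a1 @\<^sub>v a2))
       = v1 \<bullet> (P *\<^sub>v v1) + v2 \<bullet> (P *\<^sub>v v2) + 2 * (a1 \<bullet> (X *\<^sub>v a2))"
proof -
  have P0: "P0 \<in> carrier_mat (n + m) (n + m)" unfolding P0_def using P by auto
  have XT: "transpose_mat X \<in> carrier_mat (n + m) (n + m)" using X by simp
  have a: "a1 \<in> carrier_vec (n + m)" "a2 \<in> carrier_vec (n + m)" unfolding a1_def a2_def using v1 v2 w1 w2 by auto
  have P0a: "P0 *\<^sub>v (v @\<^sub>v w) = (P *\<^sub>v v) @\<^sub>v 0\<^sub>v m" if "v \<in> carrier_vec n" "w \<in> carrier_vec m" for v w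
    unfolding P0_def using that P by (simp add: blkdiag_mult_vec[OF P zero_carrier_mat] zero_mat_mult_vec)
  have q: "(v @\<^sub>v w) \<bullet> (P0 *\<^sub>v (v @\<^sub>v w)) = v \<bullet> (P *\<^sub>v v)" if "v \<in> carrier_vec n" "w \<in> carrier_vec m" for v w
    unfolding P0a[OF that] using that P by (simp add: scalar_prod_append[of _ n _ m])
  have cross: "a2 \<bullet> (transpose_mat X *\<^sub>v a1) = a1 \<bullet> (X *\<^sub>v a2)"
    using comm_scalar_prod[OF a(2), of "transpose_mat X *\<^sub>v a1"] transpose_vec_mult_scalar[OF X a(2) a(1)] XT a
    by simp
  have "((P0 @\<^sub>h X) @\<^sub>r (transpose_mat X @\<^sub>h P0)) *\<^sub>v (a1 @\<^sub>v a2)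
      = (P0 *\<^sub>v a1 + X *\<^sub>v a2) @\<^sub>v (transpose_mat X *\<^sub>v a1 + P0 *\<^sub>v a2)"
    using mat_mult_append[OF hcat_carrier[OF P0 X] hcat_carrier[OF XT P0]] P0 X XT a
    by (simp add: hcat_mult_vec)
  then have "(a1 @\<^sub>v a2) \<bullet> (((P0 @\<^sub>h X) @\<^sub>r (transpose_mat X @\<^sub>h P0)) *\<^sub>v (a1 @\<^sub>v a2))
      = a1 \<bullet> (P0 *\<^sub>v a1) + a1 \<bullet> (X *\<^sub>v a2) + (a2 \<bullet> (transpose_mat X *\<^sub>v a1) + a2 \<bullet> (P0 *\<^sub>v a2))"
    using P0 X XT a by (simp add: scalar_prod_append[of _ "n + m" _ "n + m"] scalar_prod_add_distrib[of _ "n + m"])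
  then show ?thesis unfolding cross using q v1 v2 w1 w2 by (simp add: a1_def a2_def)
qed

lemma full_block_dissipation:
  assumes P: "P \<in> carrier_mat nx nx" and XF: "XF \<in> carrier_mat (nx + np * nx) (nx + np * nx)"
    and Xi: "Xi \<in> carrier_mat (4 * np * nx) (4 * np * nx)" and S: "S \<subseteq> carrier_vec np"
    and Acl: "\<forall>p\<in>S. Acl p \<in> carrier_mat nx nx"
    and rep: "\<forall>p\<in>S. \<forall>v\<in>carrier_vec nx.
                transpose_mat (lift_mat nx p) *\<^sub>v (XF *\<^sub>v (lift_mat nx p *\<^sub>v v)) = Acl p *\<^sub>v (P *\<^sub>v v)"
    and LMI1: "neg_def (2 * nx * np + 2 * nx)
                (transpose_mat (fbsp_M1 nx np) * Xi * fbsp_M1 nx np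
                 - transpose_mat (fbsp_M2 nx np)
                   * ((blkdiag P (0\<^sub>m (nx * np) (nx * np)) @\<^sub>h XF)
                      @\<^sub>r (transpose_mat XF @\<^sub>h blkdiag P (0\<^sub>m (nx * np) (nx * np))))
                   * fbsp_M2 nx np)"
    and LMI2: "\<forall>p\<in>S. psd (2 * nx * np) (transpose_mat (fbsp_G nx np p) * Xi * fbsp_G nx np p)"
  obtains \<epsilon> :: real where "0 < \<epsilon>"
    and "\<forall>p\<in>S. \<forall>v1\<in>carrier_vec nx. \<forall>v2\<in>carrier_vec nx.
           \<epsilon> * (v1 \<bullet> v1 + v2 \<bullet> v2) \<le> v1 \<bullet> (P *\<^sub>v v1) + v2 \<bullet> (P *\<^sub>v v2) + 2 * (v1 \<bullet> (Acl p *\<^sub>v (P *\<^sub>v v2)))"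
proof -
  define W where "W = (blkdiag P (0\<^sub>m (nx * np) (nx * np)) @\<^sub>h XF)
                      @\<^sub>r (transpose_mat XF @\<^sub>h blkdiag P (0\<^sub>m (nx * np) (nx * np)))"
  have XF': "XF \<in> carrier_mat (nx + nx * np) (nx + nx * np)" using XF by (simp add: mult.commute)
  have "W \<in> carrier_mat ((nx + np * nx) + (nx + np * nx)) ((nx + np * nx) + (nx + np * nx))"
    unfolding W_def using XF P by (auto intro!: carrier_append_rows hcat_carrier simp: mult.commute[of nx])
  from full_block_S_procedure[OF Xi this LMI1[folded W_def]] obtain \<epsilon> where "0 < \<epsilon>"
    and fb: "\<And>p v1 v2. p \<in> carrier_vec np \<Longrightarrow>
      psd (2 * nx * np) (transpose_mat (fbsp_G nx np p) * Xi * fbsp_G nx np p) \<Longrightarrow> v1 \<in> carrier_vec nx \<Longrightarrow>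
      v2 \<in> carrier_vec nx \<Longrightarrow> \<epsilon> * (v1 \<bullet> v1 + v2 \<bullet> v2) \<le> ((v1 @\<^sub>v kron_vec p v1) @\<^sub>v (v2 @\<^sub>v kron_vec p v2))
        \<bullet> (W *\<^sub>v ((v1 @\<^sub>v kron_vec p v1) @\<^sub>v (v2 @\<^sub>v kron_vec p v2)))"
    by blast
  have "\<epsilon> * (v1 \<bullet> v1 + v2 \<bullet> v2) \<le> v1 \<bullet> (P *\<^sub>v v1) + v2 \<bullet> (P *\<^sub>v v2) + 2 * (v1 \<bullet> (Acl p *\<^sub>v (P *\<^sub>v v2)))"
    if pS: "p \<in> S" and v1: "v1 \<in> carrier_vec nx" and v2: "v2 \<in> carrier_vec nx" for p v1 v2
  proof -
    have p: "p \<in> carrier_vec np" using S pS by blast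
    have pv: "kron_vec p v \<in> carrier_vec (nx * np)" if "v \<in> carrier_vec nx" for v
      using kron_vec_carrier[OF p that] by (simp add: mult.commute)
    have L: "lift_mat nx p \<in> carrier_mat (nx + np * nx) nx" using p by (rule lift_mat_carrier)
    have XFL: "XF *\<^sub>v (lift_mat nx p *\<^sub>v v2) \<in> carrier_vec (nx + np * nx)" using XF L v2 by simp
    have "(v1 @\<^sub>v kron_vec p v1) \<bullet> (XF *\<^sub>v (v2 @\<^sub>v kron_vec p v2))
        = (transpose_mat (lift_mat nx p) *\<^sub>v (XF *\<^sub>v (lift_mat nx p *\<^sub>v v2))) \<bullet> v1"
      unfolding lift_mat_mult_vec[OF p v1, symmetric] lift_mat_mult_vec[OF p v2, symmetric]
        transpose_vec_mult_scalar[OF L v1 XFL]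
      using L v1 XFL by (simp add: comm_scalar_prod[of _ "nx + np * nx"])
    also have "\<dots> = v1 \<bullet> (Acl p *\<^sub>v (P *\<^sub>v v2))"
    proof -
      have "Acl p *\<^sub>v (P *\<^sub>v v2) \<in> carrier_vec nx"
        using Acl pS P v2 by (intro mult_mat_vec_carrier[of _ nx nx]) auto
      then show ?thesis using rep pS v2 comm_scalar_prod[OF _ v1] by simp
    qed
    finally have "(v1 @\<^sub>v kron_vec p v1) \<bullet> (XF *\<^sub>v (v2 @\<^sub>v kron_vec p v2)) = v1 \<bullet> (Acl p *\<^sub>v (P *\<^sub>v v2))" .
    then show ?thesis
      using fb[OF p LMI2[rule_format, OF pS] v1 v2] lyapunov_block_quadratic_form[OF P XF' v1 v2 pv[OF v1] pv[OF v2]]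
      unfolding W_def by simp
  qed
  with \<open>0 < \<epsilon>\<close> that show ?thesis by blast
qed

section \<open>Affine parameter dependence and the controller\<close>

lemma aff_carrier: "\<forall>i\<le>n. M i \<in> carrier_mat r c \<Longrightarrow> aff M p n \<in> carrier_mat r c"
  by (induction n) auto

lemma index_aff_mult_vec:
  assumes M: "\<forall>i\<le>n. M i \<in> carrier_mat r c" and x: "x \<in> carrier_vec c" and \<rho>: "\<rho> < r"
  shows "(aff M p n *\<^sub>v x) $ \<rho> = (M 0 *\<^sub>v x) $ \<rho> + (\<Sum>i<n. p $ i * (M (Suc i) *\<^sub>v x) $ \<rho>)"
  using M
proof (induction n)
  case (Suc n)
  have A: "aff M p n \<in> carrier_mat r c" and B: "M (Suc n) \<in> carrier_mat r c"
    using Suc.prems by (auto intro: aff_carrier)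
  have B': "p $ n \<cdot>\<^sub>m M (Suc n) \<in> carrier_mat r c" using B by simp
  have "(aff M p (Suc n) *\<^sub>v x) $ \<rho> = (aff M p n *\<^sub>v x) $ \<rho> + ((p $ n \<cdot>\<^sub>m M (Suc n)) *\<^sub>v x) $ \<rho>"
    using add_mult_distrib_mat_vec[OF A B' x] B x \<rho> by simp
  also have "((p $ n \<cdot>\<^sub>m M (Suc n)) *\<^sub>v x) $ \<rho> = p $ n * (M (Suc n) *\<^sub>v x) $ \<rho>"
    using B x \<rho> by (simp add: index_mult_mat_vec_sum[OF B x \<rho>] index_mult_mat_vec_sum[OF B' x \<rho>]
        sum_distrib_left mult.assoc del: index_mult_mat_vec)
  finally show ?case using Suc A by simp
qed simp

text \<open>\<open>aff_slopes m n np M\<close> is the block row \<open>[M\<^sub>1 \<cdots> M\<^sub>n\<^sub>p]\<close>, so that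
  \<open>aff M p np = M\<^sub>0 + [M\<^sub>1 \<cdots> M\<^sub>n\<^sub>p] (p \<otimes> I)\<close>.\<close>

definition aff_slopes :: "nat \<Rightarrow> nat \<Rightarrow> nat \<Rightarrow> (nat \<Rightarrow> real mat) \<Rightarrow> real mat" where
  "aff_slopes m n np M = mat m (np * n) (\<lambda>(r, j). M (Suc (j div n)) $$ (r, j mod n))"

definition col_block :: "nat \<Rightarrow> nat \<Rightarrow> real mat \<Rightarrow> nat \<Rightarrow> real mat" where
  "col_block m n M i = mat m n (\<lambda>(r, c). M $$ (r, i * n + c))"

lemma aff_slopes_carrier: "aff_slopes m n np M \<in> carrier_mat m (np * n)"
  by (simp add: aff_slopes_def)

lemma aff_mult_vec:
  assumes M: "\<forall>i\<le>np. M i \<in> carrier_mat m n" and p: "p \<in> carrier_vec np" and x: "x \<in> carrier_vec n"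
  shows "aff M p np *\<^sub>v x = M 0 *\<^sub>v x + aff_slopes m n np M *\<^sub>v kron_vec p x"
proof (rule eq_vecI)
  have px: "kron_vec p x \<in> carrier_vec (np * n)" using p x by (rule kron_vec_carrier)
  fix r assume "r < dim_vec (M 0 *\<^sub>v x + aff_slopes m n np M *\<^sub>v kron_vec p x)"
  then have r: "r < m" using M by (auto simp: aff_slopes_def)
  have "(aff_slopes m n np M *\<^sub>v kron_vec p x) $ r
      = (\<Sum>i<np. \<Sum>c<n. aff_slopes m n np M $$ (r, i * n + c) * kron_vec p x $ (i * n + c))"
    using index_mult_mat_vec_sum[OF aff_slopes_carrier px r] by (simp add: sum_mult_product add.commute)
  also have "\<dots> = (\<Sum>i<np. p $ i * (M (Suc i) *\<^sub>v x) $ r)"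
  proof (intro sum.cong refl)
    fix i assume "i \<in> {..<np}"
    then have i: "i < np" by simp
    have Mi: "M (Suc i) \<in> carrier_mat m n" using M i by simp
    have "(\<Sum>c<n. aff_slopes m n np M $$ (r, i * n + c) * kron_vec p x $ (i * n + c))
        = (\<Sum>c<n. p $ i * (M (Suc i) $$ (r, c) * x $ c))"
      using i r p x by (intro sum.cong refl) (simp add: aff_slopes_def mult_add_less_mult)
    also have "\<dots> = p $ i * (M (Suc i) *\<^sub>v x) $ r"
      by (simp add: index_mult_mat_vec_sum[OF Mi x r] sum_distrib_left del: index_mult_mat_vec)
    finally show "(\<Sum>c<n. aff_slopes m n np M $$ (r, i * n + c) * kron_vec p x $ (i * n + c))
        = p $ i * (M (Suc i) *\<^sub>v x) $ r" .
  qed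
  finally show "(aff M p np *\<^sub>v x) $ r = (M 0 *\<^sub>v x + aff_slopes m n np M *\<^sub>v kron_vec p x) $ r"
    using index_aff_mult_vec[OF M x r] M r by (simp add: aff_slopes_def)
qed (use aff_carrier[OF M, of p] in \<open>simp add: aff_slopes_def\<close>)

lemma aff_slopes_col_block:
  assumes "M \<in> carrier_mat m (np * n)"
  shows "aff_slopes m n np (\<lambda>i. if i = 0 then M0 else col_block m n M (i - 1)) = M"
proof (rule eq_matI)
  fix r j assume "r < dim_row M" "j < dim_col M"
  with assms have "r < m" "j < np * n" "0 < n" by (auto intro: gr0I)
  then show "aff_slopes m n np (\<lambda>i. if i = 0 then M0 else col_block m n M (i - 1)) $$ (r, j) = M $$ (r, j)"
    by (simp add: aff_slopes_def col_block_def)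
qed (use assms in \<open>simp_all add: aff_slopes_def\<close>)

lemma aff_closed_loop_carrier:
  assumes "\<forall>i\<le>np. A i \<in> carrier_mat nx nx" "\<forall>i\<le>np. B i \<in> carrier_mat nx nu" "\<forall>i\<le>np. K i \<in> carrier_mat nu nx"
  shows "aff A p np + aff B p np * aff K p np \<in> carrier_mat nx nx"
  using assms by (intro add_carrier_mat mult_carrier_mat[of _ nx nu _ nx] aff_carrier)

definition feedback_gain :: "nat \<Rightarrow> nat \<Rightarrow> nat \<Rightarrow> real mat \<Rightarrow> real mat \<Rightarrow> real mat \<Rightarrow> nat \<Rightarrow> real mat" where
  "feedback_gain nu nx np P Y0 Ybar =
     (\<lambda>i. if i = 0 then Y0 * minv P else col_block nu nx (Ybar * minv (kron (1\<^sub>m np) P)) (i - 1))"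

lemma feedback_gain_carrier:
  "P \<in> carrier_mat nx nx \<Longrightarrow> det P \<noteq> 0 \<Longrightarrow> Y0 \<in> carrier_mat nu nx \<Longrightarrow>
   feedback_gain nu nx np P Y0 Ybar i \<in> carrier_mat nu nx"
  using minv_mult(1) by (auto simp: feedback_gain_def col_block_def)

lemma feedback_gain_mult_vec:
  assumes P: "P \<in> carrier_mat nx nx" "det P \<noteq> 0"
    and Y0: "Y0 \<in> carrier_mat nu nx" and Ybar: "Ybar \<in> carrier_mat nu (np * nx)"
    and p: "p \<in> carrier_vec np" and v: "v \<in> carrier_vec nx"
  shows "aff (feedback_gain nu nx np P Y0 Ybar) p np *\<^sub>v (P *\<^sub>v v) = Y0 *\<^sub>v v + Ybar *\<^sub>v kron_vec p v"
proof -
  note Pinv = minv_mult[OF P]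
  define Kbar where "Kbar = Ybar * minv (kron (1\<^sub>m np) P)"
  have KPinv: "kron (1\<^sub>m np) (minv P) \<in> carrier_mat (np * nx) (np * nx)" using Pinv(1) by auto
  have Kbar: "Kbar \<in> carrier_mat nu (np * nx)"
    unfolding Kbar_def minv_kron_one[OF P] using Ybar KPinv by simp
  have K: "\<forall>i\<le>np. feedback_gain nu nx np P Y0 Ybar i \<in> carrier_mat nu nx"
    using feedback_gain_carrier[OF P Y0] by simp
  have Pv: "P *\<^sub>v v \<in> carrier_vec nx" using P v by simp
  have "aff (feedback_gain nu nx np P Y0 Ybar) p np *\<^sub>v (P *\<^sub>v v)
      = (Y0 * minv P) *\<^sub>v (P *\<^sub>v v) + Kbar *\<^sub>v kron_vec p (P *\<^sub>v v)"
    using aff_mult_vec[OF K p Pv] aff_slopes_col_block[OF Kbar]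
    unfolding feedback_gain_def Kbar_def[symmetric] by simp
  also have "(Y0 * minv P) *\<^sub>v (P *\<^sub>v v) = Y0 *\<^sub>v v"
    using Y0 Pinv v P by (simp add: assoc_mult_mat_vec[of _ nu nx _ nx] assoc_mult_mat_vec[of _ nx nx _ nx, symmetric])
  also have "Kbar *\<^sub>v kron_vec p (P *\<^sub>v v) = Ybar *\<^sub>v kron_vec p v"
  proof -
    have "kron (1\<^sub>m np) (minv P) *\<^sub>v kron_vec p (P *\<^sub>v v) = kron_vec p v"
      using kron_one_mult_kron_vec[OF Pinv(1) p Pv] P Pinv v
      by (simp add: assoc_mult_mat_vec[of _ nx nx _ nx, symmetric])
    then show ?thesis
      unfolding Kbar_def minv_kron_one[OF P]
      using Ybar KPinv kron_vec_carrier[OF p Pv] by (simp add: assoc_mult_mat_vec)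
  qed
  finally show ?thesis .
qed

section \<open>Data-based representation of the closed loop\<close>

lemma dmat_carrier [simp]: "dmat n N f \<in> carrier_mat n N"
  by (simp add: dmat_def)

lemma dim_row_dmat [simp]: "dim_row (dmat n N f) = n"
  by (simp add: dmat_def)

lemma dim_col_dmat [simp]: "dim_col (dmat n N f) = N"
  by (simp add: dmat_def)

lemma index_dmat [simp]: "i < n \<Longrightarrow> k < N \<Longrightarrow> dmat n N f $$ (i, k) = f (Suc k) $ i"
  by (simp add: dmat_def)

lemma col_dmat: "k < N \<Longrightarrow> f (Suc k) \<in> carrier_vec n \<Longrightarrow> col (dmat n N f) k = f (Suc k)"
  by (rule eq_vecI) auto

lemma dmat_cong: "(\<And>k. k < N \<Longrightarrow> f (Suc k) = g (Suc k)) \<Longrightarrow> dmat n N f = dmat n N g"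
  by (rule eq_matI) auto

lemma dmat_add:
  "\<forall>k<N. f (Suc k) \<in> carrier_vec n \<and> g (Suc k) \<in> carrier_vec n \<Longrightarrow>
   dmat n N (\<lambda>k. f k + g k) = dmat n N f + dmat n N g"
  by (rule eq_matI) auto

lemma mult_dmat:
  assumes "M \<in> carrier_mat m n" "\<forall>k<N. f (Suc k) \<in> carrier_vec n"
  shows "M * dmat n N f = dmat m N (\<lambda>k. M *\<^sub>v f k)"
  by (rule eq_matI) (use assms in \<open>auto simp: col_dmat\<close>)

text \<open>A combination \<open>w\<close> of the data columns that is consistent with the Kronecker structure
  evaluates an affine matrix function at a frozen parameter \<open>p\<close>.\<close>

lemma dmat_aff_mult_vec:
  assumes M: "\<forall>i\<le>np. M i \<in> carrier_mat m n"
    and fg: "\<forall>k<N. f (Suc k) \<in> carrier_vec n \<and> g (Suc k) \<in> carrier_vec np"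
    and w: "w \<in> carrier_vec N" and p: "p \<in> carrier_vec np"
    and kron: "dmat (np * n) N (\<lambda>k. kron_vec (g k) (f k)) *\<^sub>v w = kron_vec p (dmat n N f *\<^sub>v w)"
  shows "dmat m N (\<lambda>k. aff M (g k) np *\<^sub>v f k) *\<^sub>v w = aff M p np *\<^sub>v (dmat n N f *\<^sub>v w)"
proof -
  define S where "S = aff_slopes m n np M"
  have S: "S \<in> carrier_mat m (np * n)" unfolding S_def by (rule aff_slopes_carrier)
  have M0: "M 0 \<in> carrier_mat m n" using M by simp
  have "dmat m N (\<lambda>k. aff M (g k) np *\<^sub>v f k) = dmat m N (\<lambda>k. M 0 *\<^sub>v f k + S *\<^sub>v kron_vec (g k) (f k))"
    using fg by (intro dmat_cong) (simp add: aff_mult_vec[OF M] S_def)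
  also have "\<dots> = M 0 * dmat n N f + S * dmat (np * n) N (\<lambda>k. kron_vec (g k) (f k))"
    using M0 S fg by (simp add: dmat_add mult_dmat kron_vec_carrier)
  finally have "dmat m N (\<lambda>k. aff M (g k) np *\<^sub>v f k) *\<^sub>v w
      = M 0 *\<^sub>v (dmat n N f *\<^sub>v w) + S *\<^sub>v kron_vec p (dmat n N f *\<^sub>v w)"
    using M0 S w
    by (simp add: add_mult_distrib_mat_vec[of _ m N] assoc_mult_mat_vec[of _ m n _ N]
        assoc_mult_mat_vec[of _ m "np * n" _ N] kron)
  then show ?thesis
    unfolding S_def using aff_mult_vec[OF M p mult_mat_vec_carrier[OF dmat_carrier w]] by simp
qed

lemma shifted_data_mult_vec:
  fixes xd ud pd :: "nat \<Rightarrow> real vec"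
  assumes A: "\<forall>i\<le>np. A i \<in> carrier_mat nx nx" and B: "\<forall>i\<le>np. B i \<in> carrier_mat nx nu"
    and dims: "\<forall>k<N. xd (Suc k) \<in> carrier_vec nx \<and> ud (Suc k) \<in> carrier_vec nu \<and> pd (Suc k) \<in> carrier_vec np"
    and traj: "\<forall>k<N. xd (Suc (Suc k)) = aff A (pd (Suc k)) np *\<^sub>v xd (Suc k) + aff B (pd (Suc k)) np *\<^sub>v ud (Suc k)"
    and w: "w \<in> carrier_vec N" and p: "p \<in> carrier_vec np"
    and kron_x: "dmat (np * nx) N (\<lambda>k. kron_vec (pd k) (xd k)) *\<^sub>v w = kron_vec p (dmat nx N xd *\<^sub>v w)"
    and kron_u: "dmat (np * nu) N (\<lambda>k. kron_vec (pd k) (ud k)) *\<^sub>v w = kron_vec p (dmat nu N ud *\<^sub>v w)"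
  shows "dmat nx N (\<lambda>k. xd (Suc k)) *\<^sub>v w
       = aff A p np *\<^sub>v (dmat nx N xd *\<^sub>v w) + aff B p np *\<^sub>v (dmat nu N ud *\<^sub>v w)"
proof -
  have "dmat nx N (\<lambda>k. xd (Suc k))
      = dmat nx N (\<lambda>k. aff A (pd k) np *\<^sub>v xd k) + dmat nx N (\<lambda>k. aff B (pd k) np *\<^sub>v ud k)"
    using traj dims aff_carrier[OF A] aff_carrier[OF B]
    by (subst dmat_add[symmetric]) (auto intro!: dmat_cong mult_mat_vec_carrier)
  then show ?thesis
    using w dims
    by (simp add: add_mult_distrib_mat_vec[of _ nx N] dmat_aff_mult_vec[OF A _ w p kron_x]
        dmat_aff_mult_vec[OF B _ w p kron_u])
qed

lemma design_blocks_mult_vec: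
  assumes P: "P \<in> carrier_mat nx nx" and Y0: "Y0 \<in> carrier_mat nu nx" and Ybar: "Ybar \<in> carrier_mat nu (np * nx)"
    and p: "p \<in> carrier_vec np" and v: "v \<in> carrier_vec nx"
  defines "y \<equiv> Y0 *\<^sub>v v + Ybar *\<^sub>v kron_vec p v"
  shows "((P @\<^sub>h 0\<^sub>m nx (np * nx) @\<^sub>h 0\<^sub>m nx (np * np * nx))
          @\<^sub>r (0\<^sub>m (np * nx) nx @\<^sub>h kron (1\<^sub>m np) P @\<^sub>h 0\<^sub>m (np * nx) (np * np * nx))
          @\<^sub>r (Y0 @\<^sub>h Ybar @\<^sub>h 0\<^sub>m nu (np * np * nx))
          @\<^sub>r (0\<^sub>m (np * nu) nx @\<^sub>h kron (1\<^sub>m np) Y0 @\<^sub>h kron (1\<^sub>m np) Ybar))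
         *\<^sub>v (v @\<^sub>v kron_vec p v @\<^sub>v kron_vec p (kron_vec p v))
       = (P *\<^sub>v v) @\<^sub>v kron_vec p (P *\<^sub>v v) @\<^sub>v y @\<^sub>v kron_vec p y"
proof -
  have pv: "kron_vec p v \<in> carrier_vec (np * nx)" using p v by (rule kron_vec_carrier)
  have ppv: "kron_vec p (kron_vec p v) \<in> carrier_vec (np * np * nx)"
    using kron_vec_carrier[OF p pv] by (simp add: mult.assoc)
  have KP: "kron (1\<^sub>m np) P \<in> carrier_mat (np * nx) (np * nx)" using P by auto
  have KY0: "kron (1\<^sub>m np) Y0 \<in> carrier_mat (np * nu) (np * nx)" using Y0 by auto
  have KYbar: "kron (1\<^sub>m np) Ybar \<in> carrier_mat (np * nu) (np * np * nx)"
    using kron_carrier_matI[OF one_carrier_mat[of np] Ybar] by (simp add: mult.assoc)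
  have 0: "0\<^sub>m r c *\<^sub>v x = 0\<^sub>v r" if "x \<in> carrier_vec c" for r c and x :: "real vec"
    using that by (rule zero_mat_mult_vec)
  have "(P @\<^sub>h 0\<^sub>m nx (np * nx) @\<^sub>h 0\<^sub>m nx (np * np * nx)) *\<^sub>v (v @\<^sub>v kron_vec p v @\<^sub>v kron_vec p (kron_vec p v))
      = P *\<^sub>v v"
    unfolding hcat3_mult_vec[OF P zero_carrier_mat zero_carrier_mat v pv ppv] using P v pv ppv by (simp add: 0)
  moreover have "(0\<^sub>m (np * nx) nx @\<^sub>h kron (1\<^sub>m np) P @\<^sub>h 0\<^sub>m (np * nx) (np * np * nx))
      *\<^sub>v (v @\<^sub>v kron_vec p v @\<^sub>v kron_vec p (kron_vec p v)) = kron_vec p (P *\<^sub>v v)"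
    unfolding hcat3_mult_vec[OF zero_carrier_mat KP zero_carrier_mat v pv ppv]
    using KP v pv ppv kron_vec_carrier[OF p mult_mat_vec_carrier[OF P v]]
    by (simp add: 0 kron_one_mult_kron_vec[OF P p v])
  moreover have "(Y0 @\<^sub>h Ybar @\<^sub>h 0\<^sub>m nu (np * np * nx)) *\<^sub>v (v @\<^sub>v kron_vec p v @\<^sub>v kron_vec p (kron_vec p v)) = y"
    unfolding hcat3_mult_vec[OF Y0 Ybar zero_carrier_mat v pv ppv] y_def using Ybar pv ppv by (simp add: 0)
  moreover have "(0\<^sub>m (np * nu) nx @\<^sub>h kron (1\<^sub>m np) Y0 @\<^sub>h kron (1\<^sub>m np) Ybar)
      *\<^sub>v (v @\<^sub>v kron_vec p v @\<^sub>v kron_vec p (kron_vec p v)) = kron_vec p y"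
    unfolding hcat3_mult_vec[OF zero_carrier_mat KY0 KYbar v pv ppv] y_def
    using Y0 Ybar KY0 v pv kron_vec_carrier[OF p mult_mat_vec_carrier[OF Y0 v]]
      kron_vec_carrier[OF p mult_mat_vec_carrier[OF Ybar pv]]
    by (simp add: 0 kron_one_mult_kron_vec[OF Y0 p v] kron_one_mult_kron_vec[OF Ybar p pv] kron_vec_add[of _ nu])
  ultimately show ?thesis
    using v pv ppv P KP Y0 Ybar KY0 KYbar
    by (subst append_rows4_mult_vec[of _ nx "nx + (np * nx + np * np * nx)" _ "np * nx" _ nu _ "np * nu"])
       (auto intro!: hcat_carrier)
qed

lemma data_solution_mult_vec:
  assumes P: "P \<in> carrier_mat nx nx" and Y0: "Y0 \<in> carrier_mat nu nx" and Ybar: "Ybar \<in> carrier_mat nu (np * nx)"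
    and X: "X \<in> carrier_mat nx N" and XP: "XP \<in> carrier_mat (np * nx) N"
    and U: "U \<in> carrier_mat nu N" and UP: "UP \<in> carrier_mat (np * nu) N"
    and F: "F \<in> carrier_mat N (nx + (np * nx + np * np * nx))"
    and DpF: "(P @\<^sub>h 0\<^sub>m nx (np * nx) @\<^sub>h 0\<^sub>m nx (np * np * nx))
              @\<^sub>r (0\<^sub>m (np * nx) nx @\<^sub>h kron (1\<^sub>m np) P @\<^sub>h 0\<^sub>m (np * nx) (np * np * nx))
              @\<^sub>r (Y0 @\<^sub>h Ybar @\<^sub>h 0\<^sub>m nu (np * np * nx))
              @\<^sub>r (0\<^sub>m (np * nu) nx @\<^sub>h kron (1\<^sub>m np) Y0 @\<^sub>h kron (1\<^sub>m np) Ybar)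
            = (X @\<^sub>r XP @\<^sub>r U @\<^sub>r UP) * F"
    and p: "p \<in> carrier_vec np" and v: "v \<in> carrier_vec nx"
  defines "w \<equiv> F *\<^sub>v (v @\<^sub>v kron_vec p v @\<^sub>v kron_vec p (kron_vec p v))"
    and "y \<equiv> Y0 *\<^sub>v v + Ybar *\<^sub>v kron_vec p v"
  shows "X *\<^sub>v w = P *\<^sub>v v" "XP *\<^sub>v w = kron_vec p (P *\<^sub>v v)"
    "U *\<^sub>v w = y" "UP *\<^sub>v w = kron_vec p y"
proof -
  define z where "z = v @\<^sub>v kron_vec p v @\<^sub>v kron_vec p (kron_vec p v)"
  have z: "z \<in> carrier_vec (nx + (np * nx + np * np * nx))"
    unfolding z_def using v kron_vec_carrier[OF p v] kron_vec_carrier[OF p kron_vec_carrier[OF p v]]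
    by (simp add: mult.assoc)
  have w: "w \<in> carrier_vec N" unfolding w_def z_def[symmetric] using F z by simp
  have y: "y \<in> carrier_vec nu" unfolding y_def using Y0 Ybar v kron_vec_carrier[OF p v] by simp
  have "(X *\<^sub>v w) @\<^sub>v (XP *\<^sub>v w) @\<^sub>v (U *\<^sub>v w) @\<^sub>v (UP *\<^sub>v w) = ((X @\<^sub>r XP @\<^sub>r U @\<^sub>r UP) * F) *\<^sub>v z"
    unfolding w_def z_def[symmetric] using X XP U UP F z
    by (simp add: assoc_mult_mat_vec[of _ "nx + (np * nx + (nu + np * nu))" N] append_rows4_mult_vec
        carrier_append_rows)
  also have "\<dots> = (P *\<^sub>v v) @\<^sub>v kron_vec p (P *\<^sub>v v) @\<^sub>v y @\<^sub>v kron_vec p y"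
    unfolding DpF[symmetric] z_def y_def by (rule design_blocks_mult_vec[OF P Y0 Ybar p v])
  finally have "X *\<^sub>v w = P *\<^sub>v v \<and> XP *\<^sub>v w = kron_vec p (P *\<^sub>v v) \<and> U *\<^sub>v w = y \<and> UP *\<^sub>v w = kron_vec p y"
    using y mult_mat_vec_carrier[OF X w] mult_mat_vec_carrier[OF XP w] mult_mat_vec_carrier[OF U w]
      mult_mat_vec_carrier[OF P v] kron_vec_carrier[OF p mult_mat_vec_carrier[OF P v]]
    by (simp add: append_vec_eq)
  then show "X *\<^sub>v w = P *\<^sub>v v" "XP *\<^sub>v w = kron_vec p (P *\<^sub>v v)" "U *\<^sub>v w = y" "UP *\<^sub>v w = kron_vec p y"
    by auto
qed

lemma closed_loop_of_data_solution:
  fixes xd ud pd :: "nat \<Rightarrow> real vec"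
  assumes A: "\<forall>i\<le>np. A i \<in> carrier_mat nx nx" and B: "\<forall>i\<le>np. B i \<in> carrier_mat nx nu"
    and dims: "\<forall>k<N. xd (Suc k) \<in> carrier_vec nx \<and> ud (Suc k) \<in> carrier_vec nu \<and> pd (Suc k) \<in> carrier_vec np"
    and traj: "\<forall>k<N. xd (Suc (Suc k)) = aff A (pd (Suc k)) np *\<^sub>v xd (Suc k) + aff B (pd (Suc k)) np *\<^sub>v ud (Suc k)"
    and P: "P \<in> carrier_mat nx nx" "det P \<noteq> 0"
    and Y0: "Y0 \<in> carrier_mat nu nx" and Ybar: "Ybar \<in> carrier_mat nu (np * nx)"
    and F: "F \<in> carrier_mat N (nx + (np * nx + np * np * nx))"
    and DpF: "(P @\<^sub>h 0\<^sub>m nx (np * nx) @\<^sub>h 0\<^sub>m nx (np * np * nx))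
              @\<^sub>r (0\<^sub>m (np * nx) nx @\<^sub>h kron (1\<^sub>m np) P @\<^sub>h 0\<^sub>m (np * nx) (np * np * nx))
              @\<^sub>r (Y0 @\<^sub>h Ybar @\<^sub>h 0\<^sub>m nu (np * np * nx))
              @\<^sub>r (0\<^sub>m (np * nu) nx @\<^sub>h kron (1\<^sub>m np) Y0 @\<^sub>h kron (1\<^sub>m np) Ybar)
            = (dmat nx N xd @\<^sub>r dmat (np * nx) N (\<lambda>k. kron_vec (pd k) (xd k))
               @\<^sub>r dmat nu N ud @\<^sub>r dmat (np * nu) N (\<lambda>k. kron_vec (pd k) (ud k))) * F"
    and p: "p \<in> carrier_vec np" and v: "v \<in> carrier_vec nx"
  shows "dmat nx N (\<lambda>k. xd (Suc k)) *\<^sub>v (F *\<^sub>v (v @\<^sub>v kron_vec p v @\<^sub>v kron_vec p (kron_vec p v)))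
       = (aff A p np + aff B p np * aff (feedback_gain nu nx np P Y0 Ybar) p np) *\<^sub>v (P *\<^sub>v v)"
proof -
  define w where "w = F *\<^sub>v (v @\<^sub>v kron_vec p v @\<^sub>v kron_vec p (kron_vec p v))"
  define y where "y = Y0 *\<^sub>v v + Ybar *\<^sub>v kron_vec p v"
  note sol = data_solution_mult_vec[OF P(1) Y0 Ybar dmat_carrier dmat_carrier dmat_carrier dmat_carrier F DpF p v,
      folded w_def y_def]
  have "w \<in> carrier_vec N"
    unfolding w_def using F v kron_vec_carrier[OF p v] kron_vec_carrier[OF p kron_vec_carrier[OF p v]]
    by (simp add: mult.assoc)
  from shifted_data_mult_vec[OF A B dims traj this p]
  have "dmat nx N (\<lambda>k. xd (Suc k)) *\<^sub>v w = aff A p np *\<^sub>v (P *\<^sub>v v) + aff B p np *\<^sub>v y"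
    unfolding sol by simp
  also have "\<dots> = (aff A p np + aff B p np * aff (feedback_gain nu nx np P Y0 Ybar) p np) *\<^sub>v (P *\<^sub>v v)"
  proof -
    have K: "aff (feedback_gain nu nx np P Y0 Ybar) p np \<in> carrier_mat nu nx"
      using feedback_gain_carrier[OF P Y0] by (intro aff_carrier) simp
    have Pv: "P *\<^sub>v v \<in> carrier_vec nx" using P v by simp
    note AB = aff_carrier[OF A, of p] aff_carrier[OF B, of p]
    show ?thesis
      unfolding add_mult_distrib_mat_vec[OF AB(1) mult_carrier_mat[OF AB(2) K] Pv]
        assoc_mult_mat_vec[OF AB(2) K Pv] y_def feedback_gain_mult_vec[OF P Y0 Ybar p v] ..
  qed
  finally show ?thesis unfolding w_def .
qed

lemma data_based_closed_loop:
  fixes xd ud pd :: "nat \<Rightarrow> real vec" and nx Nd :: nat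
  defines "Xplus \<equiv> dmat nx (Nd - 1) (\<lambda>k. xd (Suc k))"
  assumes A: "\<forall>i\<le>np. A i \<in> carrier_mat nx nx" and B: "\<forall>i\<le>np. B i \<in> carrier_mat nx nu"
    and data_dims: "\<forall>k\<in>{1..Nd}. xd k \<in> carrier_vec nx \<and> ud k \<in> carrier_vec nu \<and> pd k \<in> carrier_vec np"
    and data_traj: "\<forall>k\<in>{1..<Nd}. xd (Suc k) = aff A (pd k) np *\<^sub>v xd k + aff B (pd k) np *\<^sub>v ud k"
    and P: "P \<in> carrier_mat nx nx" "det P \<noteq> 0"
    and Y0: "Y0 \<in> carrier_mat nu nx" and Ybar: "Ybar \<in> carrier_mat nu (nx * np)"
    and F: "F \<in> carrier_mat (Nd - 1) (nx * (1 + np + np * np))"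
    and FQ: "FQ \<in> carrier_mat ((Nd - 1) * (1 + np)) (nx * (1 + np))"
    and DpF: "(P @\<^sub>h 0\<^sub>m nx (np * nx) @\<^sub>h 0\<^sub>m nx (np * np * nx))
              @\<^sub>r (0\<^sub>m (np * nx) nx @\<^sub>h kron (1\<^sub>m np) P @\<^sub>h 0\<^sub>m (np * nx) (np * np * nx))
              @\<^sub>r (Y0 @\<^sub>h Ybar @\<^sub>h 0\<^sub>m nu (np * np * nx))
              @\<^sub>r (0\<^sub>m (np * nu) nx @\<^sub>h kron (1\<^sub>m np) Y0 @\<^sub>h kron (1\<^sub>m np) Ybar)
            = (dmat nx (Nd - 1) xd @\<^sub>r dmat (np * nx) (Nd - 1) (\<lambda>k. kron_vec (pd k) (xd k))
               @\<^sub>r dmat nu (Nd - 1) ud @\<^sub>r dmat (np * nu) (Nd - 1) (\<lambda>k. kron_vec (pd k) (ud k))) * F"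
    and p: "p \<in> carrier_vec np"
    and F_FQ: "F * (1\<^sub>m nx @\<^sub>r kron (colmat p) (1\<^sub>m nx) @\<^sub>r kron (kron (colmat p) (colmat p)) (1\<^sub>m nx))
               = transpose_mat (1\<^sub>m (Nd - 1) @\<^sub>r kron (colmat p) (1\<^sub>m (Nd - 1))) * FQ
                 * (1\<^sub>m nx @\<^sub>r kron (colmat p) (1\<^sub>m nx))"
    and v: "v \<in> carrier_vec nx"
  shows "transpose_mat (lift_mat nx p) *\<^sub>v ((blkdiag Xplus (kron (1\<^sub>m np) Xplus) * FQ) *\<^sub>v (lift_mat nx p *\<^sub>v v))
       = (aff A p np + aff B p np * aff (feedback_gain nu nx np P Y0 Ybar) p np) *\<^sub>v (P *\<^sub>v v)"
proof -
  define N where "N = Nd - 1"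
  have FQ': "FQ \<in> carrier_mat (N + np * N) (nx + np * nx)" using FQ[folded N_def] by (simp add: algebra_simps)
  have L: "lift_mat nx p \<in> carrier_mat (nx + np * nx) nx" and T: "transpose_mat (lift_mat N p) \<in> carrier_mat N (N + np * N)"
    using p by (auto intro: lift_mat_carrier)
  have Lv: "lift_mat nx p *\<^sub>v v \<in> carrier_vec (nx + np * nx)" using L v by simp
  have Pi3: "(1\<^sub>m nx @\<^sub>r kron (colmat p) (1\<^sub>m nx) @\<^sub>r kron (kron (colmat p) (colmat p)) (1\<^sub>m nx))
      \<in> carrier_mat (nx + (np * nx + np * np * nx)) nx"
    using p kron_colmat_one_carrier[OF kron_vec_carrier[OF p p]]
    by (intro carrier_append_rows kron_colmat_one_carrier) (auto simp: colmat_kron_vec)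
  have F': "F \<in> carrier_mat N (nx + (np * nx + np * np * nx))" using F[folded N_def] by (simp add: algebra_simps)
  have Xplus: "Xplus \<in> carrier_mat nx N" unfolding Xplus_def N_def by simp
  have BX: "blkdiag Xplus (kron (1\<^sub>m np) Xplus) \<in> carrier_mat (nx + np * nx) (N + np * N)"
    using Xplus by (intro blkdiag_carrier kron_carrier_matI) auto
  have "transpose_mat (lift_mat N p) *\<^sub>v (FQ *\<^sub>v (lift_mat nx p *\<^sub>v v))
      = (transpose_mat (lift_mat N p) * FQ * lift_mat nx p) *\<^sub>v v"
    by (simp add: assoc_mult_mat_vec[OF mult_carrier_mat[OF T FQ'] L v] assoc_mult_mat_vec[OF T FQ' Lv])
  also have "\<dots> = F *\<^sub>v (v @\<^sub>v kron_vec p v @\<^sub>v kron_vec p (kron_vec p v))"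
    unfolding lift2_mult_vec[OF p v, symmetric] lift_mat_def N_def F_FQ[symmetric]
    by (rule assoc_mult_mat_vec[OF F'[unfolded N_def] Pi3 v])
  finally have "transpose_mat (lift_mat nx p) *\<^sub>v ((blkdiag Xplus (kron (1\<^sub>m np) Xplus) * FQ) *\<^sub>v (lift_mat nx p *\<^sub>v v))
      = Xplus *\<^sub>v (F *\<^sub>v (v @\<^sub>v kron_vec p v @\<^sub>v kron_vec p (kron_vec p v)))"
    using transpose_lift_mat_mult_blkdiag[OF p Xplus mult_mat_vec_carrier[OF FQ' Lv]]
    by (simp add: assoc_mult_mat_vec[OF BX FQ' Lv])
  also have "\<dots> = (aff A p np + aff B p np * aff (feedback_gain nu nx np P Y0 Ybar) p np) *\<^sub>v (P *\<^sub>v v)"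
    unfolding Xplus_def N_def[symmetric]
  proof (rule closed_loop_of_data_solution[OF A B _ _ P Y0 _ F' DpF[folded N_def] p v])
    show "\<forall>k<N. xd (Suc k) \<in> carrier_vec nx \<and> ud (Suc k) \<in> carrier_vec nu \<and> pd (Suc k) \<in> carrier_vec np"
      using data_dims unfolding N_def by auto
    show "\<forall>k<N. xd (Suc (Suc k)) = aff A (pd (Suc k)) np *\<^sub>v xd (Suc k) + aff B (pd (Suc k)) np *\<^sub>v ud (Suc k)"
      using data_traj unfolding N_def by auto
  qed (use Ybar in \<open>simp add: mult.commute\<close>)
  finally show ?thesis .
qed

theorem theorem3:
  fixes nx nu np Nd :: nat
    and S :: "real vec set"
    and A B :: "nat \<Rightarrow> real mat"
    and ud pd xd :: "nat \<Rightarrow> real vec"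
    and P F FQ Y0 Ybar Xi :: "real mat"
  assumes S: "sched_set np S"
    and A: "\<forall>i\<le>np. A i \<in> carrier_mat nx nx"
    and B: "\<forall>i\<le>np. B i \<in> carrier_mat nx nu"
    and data_dims: "\<forall>k\<in>{1..Nd}. xd k \<in> carrier_vec nx \<and> ud k \<in> carrier_vec nu \<and> pd k \<in> S"
    and data_traj: "\<forall>k\<in>{1..<Nd}. xd (Suc k) = aff A (pd k) np *\<^sub>v xd k + aff B (pd k) np *\<^sub>v ud k"
    and rank: "let Dp = dmat nx (Nd - 1) xd
                   @\<^sub>r dmat (np * nx) (Nd - 1) (\<lambda>k. kron_vec (pd k) (xd k))
                   @\<^sub>r dmat nu (Nd - 1) ud
                   @\<^sub>r dmat (np * nu) (Nd - 1) (\<lambda>k. kron_vec (pd k) (ud k))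
               in vec_space.rank (dim_row Dp) Dp = (1 + np) * (nx + nu)"
    and P: "pos_def nx P"
    and F: "F \<in> carrier_mat (Nd - 1) (nx * (1 + np + np * np))"
    and FQ: "FQ \<in> carrier_mat ((Nd - 1) * (1 + np)) (nx * (1 + np))"
    and F_FQ: "\<forall>p\<in>S. F * (1\<^sub>m nx @\<^sub>r kron (colmat p) (1\<^sub>m nx) @\<^sub>r kron (kron (colmat p) (colmat p)) (1\<^sub>m nx))
                 = transpose_mat (1\<^sub>m (Nd - 1) @\<^sub>r kron (colmat p) (1\<^sub>m (Nd - 1))) * FQ
                   * (1\<^sub>m nx @\<^sub>r kron (colmat p) (1\<^sub>m nx))"
    and Y0: "Y0 \<in> carrier_mat nu nx"
    and Ybar: "Ybar \<in> carrier_mat nu (nx * np)"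
    and Xi: "sym_mat (4 * np * nx) Xi"
    and DpF: "(P @\<^sub>h 0\<^sub>m nx (np * nx) @\<^sub>h 0\<^sub>m nx (np * np * nx))
              @\<^sub>r (0\<^sub>m (np * nx) nx @\<^sub>h kron (1\<^sub>m np) P @\<^sub>h 0\<^sub>m (np * nx) (np * np * nx))
              @\<^sub>r (Y0 @\<^sub>h Ybar @\<^sub>h 0\<^sub>m nu (np * np * nx))
              @\<^sub>r (0\<^sub>m (np * nu) nx @\<^sub>h kron (1\<^sub>m np) Y0 @\<^sub>h kron (1\<^sub>m np) Ybar)
            = (dmat nx (Nd - 1) xd
               @\<^sub>r dmat (np * nx) (Nd - 1) (\<lambda>k. kron_vec (pd k) (xd k))
               @\<^sub>r dmat nu (Nd - 1) ud
               @\<^sub>r dmat (np * nu) (Nd - 1) (\<lambda>k. kron_vec (pd k) (ud k))) * F"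
    and LMI1: "let Xplus = dmat nx (Nd - 1) (\<lambda>k. xd (Suc k));
                   XF = blkdiag Xplus (kron (1\<^sub>m np) Xplus) * FQ;
                   P0 = blkdiag P (0\<^sub>m (nx * np) (nx * np));
                   W = (P0 @\<^sub>h XF) @\<^sub>r (transpose_mat XF @\<^sub>h P0);
                   L11 = 0\<^sub>m (2 * nx * np) (2 * nx * np);
                   L12 = kron (ones np) (1\<^sub>m (2 * nx));
                   L21 = 0\<^sub>m nx (2 * nx * np)
                         @\<^sub>r kron (1\<^sub>m np) (1\<^sub>m nx @\<^sub>h 0\<^sub>m nx nx)
                         @\<^sub>r 0\<^sub>m nx (2 * nx * np)
                         @\<^sub>r kron (1\<^sub>m np) (0\<^sub>m nx nx @\<^sub>h 1\<^sub>m nx);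
                   L22 = (1\<^sub>m nx @\<^sub>h 0\<^sub>m nx nx)
                         @\<^sub>r kron (ones np) (0\<^sub>m nx (2 * nx))
                         @\<^sub>r (0\<^sub>m nx nx @\<^sub>h 1\<^sub>m nx)
                         @\<^sub>r kron (ones np) (0\<^sub>m nx (2 * nx));
                   M1 = (L11 @\<^sub>h L12) @\<^sub>r (1\<^sub>m (2 * nx * np) @\<^sub>h 0\<^sub>m (2 * nx * np) (2 * nx));
                   M2 = L21 @\<^sub>h L22
               in neg_def (2 * nx * np + 2 * nx)
                    (transpose_mat M1 * Xi * M1 - transpose_mat M2 * W * M2)"
    and LMI2: "\<forall>p\<in>S. let G = 1\<^sub>m (2 * nx * np) @\<^sub>r kron (diagm p) (1\<^sub>m (2 * nx))
                      in psd (2 * nx * np) (transpose_mat G * Xi * G)"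
  shows "let K0 = Y0 * minv P;
             Kbar = Ybar * minv (kron (1\<^sub>m np) P);
             K = (\<lambda>i. if i = 0 then K0 else mat nu nx (\<lambda>(r,c). Kbar $$ (r, (i - 1) * nx + c)))
         in asymp_stable_LPV nx S (\<lambda>p. aff A p np + aff B p np * aff K p np)"
proof -
  define XF where "XF = blkdiag (dmat nx (Nd - 1) (\<lambda>k. xd (Suc k))) (kron (1\<^sub>m np) (dmat nx (Nd - 1) (\<lambda>k. xd (Suc k)))) * FQ"
  define Acl where "Acl p = aff A p np + aff B p np * aff (feedback_gain nu nx np P Y0 Ybar) p np" for p
  have Pc: "P \<in> carrier_mat nx nx" and detP: "det P \<noteq> 0" using P by (auto simp: pos_def_carrier pos_def_det_nonzero)
  have Sc: "S \<subseteq> carrier_vec np" using S by (simp add: sched_set_def)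
  have XF_c: "XF \<in> carrier_mat (nx + np * nx) (nx + np * nx)"
    unfolding XF_def by (rule lift_blkdiag_mult_carrier[OF dmat_carrier FQ])
  have Acl_c: "\<forall>p\<in>S. Acl p \<in> carrier_mat nx nx"
    unfolding Acl_def using A B feedback_gain_carrier[OF Pc detP Y0] by (simp add: aff_closed_loop_carrier)
  have "\<forall>k\<in>{1..Nd}. xd k \<in> carrier_vec nx \<and> ud k \<in> carrier_vec nu \<and> pd k \<in> carrier_vec np"
    using data_dims Sc by blast
  then have rep: "\<forall>p\<in>S. \<forall>v\<in>carrier_vec nx.
      transpose_mat (lift_mat nx p) *\<^sub>v (XF *\<^sub>v (lift_mat nx p *\<^sub>v v)) = Acl p *\<^sub>v (P *\<^sub>v v)"
    unfolding XF_def Acl_def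
    using data_based_closed_loop[OF A B _ data_traj Pc detP Y0 Ybar F FQ DpF] F_FQ Sc by blast
  note LMI1' = LMI1[unfolded Let_def, folded fbsp_M1_def fbsp_M2_def XF_def]
  note LMI2' = LMI2[unfolded Let_def, folded fbsp_G_def]
  obtain \<epsilon> where "0 < \<epsilon>" and diss: "\<forall>p\<in>S. \<forall>v1\<in>carrier_vec nx. \<forall>v2\<in>carrier_vec nx.
      \<epsilon> * (v1 \<bullet> v1 + v2 \<bullet> v2) \<le> v1 \<bullet> (P *\<^sub>v v1) + v2 \<bullet> (P *\<^sub>v v2) + 2 * (v1 \<bullet> (Acl p *\<^sub>v (P *\<^sub>v v2)))"
    by (rule full_block_dissipation[OF Pc XF_c Xi[unfolded sym_mat_def, THEN conjunct1] Sc Acl_c rep LMI1' LMI2'])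
  have "asymp_stable_LPV nx S Acl"
    by (rule asymp_stable_LPV_of_dissipation[OF P Acl_c \<open>0 < \<epsilon>\<close> diss])
  then show ?thesis unfolding Let_def Acl_def feedback_gain_def col_block_def .
qed

end
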